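(* Let $A,\Delta A\in\mathbb{R}^{n\times m}$, $\widetilde A=A+\Delta A$ and $1\le r<\min\{n,m\}$. Then \[\max\{\|\sin\Theta(U_1,\widetilde U_1)\|,\|\sin\Theta(V_1,\widetilde V_1)\|\}\le\min\Big\{\frac{2\|\Delta A\|}{\sigma_r-\sigma_{r+1}},1\Big\},\] where the minimum is interpreted as $1$ when $\sigma_r=\sigma_{r+1}$. Moreover, if $4\|\Delta A\|\le\sigma_r-\sigma_{r+1}$, then \[\|\sin\Theta(U_1,\widetilde U_1)\|\le\frac{8}{3}\cdot\frac{\sigma_r\|\alpha_{21}\|+\sigma_{r+1}\|\alpha_{12}\|+\|\alpha_{22}\|\|\alpha_{12}\|}{\sigma_r^2-\sigma_{r+1}^2},\qquad \|\sin\Theta(V_1,\widetilde V_1)\|\le\frac{8}{3}\cdot\frac{\sigma_r\|\alpha_{12}\|+\sigma_{r+1}\|\alpha_{21}\|+\|\alpha_{22}\|\|\alpha_{21}\|}{\sigma_r^2-\sigma_{r+1}^2},\] where $\alpha_{12}=U_1^T(\Delta A)V_2$, $\alpha_{21}=U_2^T(\Delta A)V_1$, $\alpha_{22}=U_2^T(\Delta A)V_2$.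
   Context: $A=U\Sigma V^T$ and $\widetilde A=\widetilde U\widetilde\Sigma\widetilde V^T$ are full SVDs with singular values $\sigma_1\ge\sigma_2\ge\dots$ of $A$ in nonincreasing order. $U=(U_1\ U_2)$ with $U_1\in\mathbb{R}^{n\times r}$, $V=(V_1\ V_2)$ with $V_1\in\mathbb{R}^{m\times r}$, and likewise $\widetilde U_1\in\mathbb{R}^{n\times r},\widetilde V_1\in\mathbb{R}^{m\times r}$ hold the leading $r$ singular vectors of $\widetilde A$. $\|\cdot\|$ is the spectral norm. For $X,\widetilde X\in\mathbb{R}^{d\times r}$ with orthonormal columns, if $\zeta_1\ge\dots\ge\zeta_r$ are the singular values of $X^T\widetilde X$, then $\sin\Theta(X,\widetilde X)=\mathrm{diag}(\sqrt{1-\zeta_1^2},\dots,\sqrt{1-\zeta_r^2})$. *)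

theory Defs
  imports "Jordan_Normal_Form.Matrix"
begin

definition is_svd :: "real mat \<Rightarrow> real mat \<Rightarrow> real mat \<Rightarrow> real mat \<Rightarrow> bool" where
  "is_svd A U S V \<longleftrightarrow>
     (let n = dim_row A; m = dim_col A in
       U \<in> carrier_mat n n \<and> V \<in> carrier_mat m m \<and> S \<in> carrier_mat n m \<and>
       transpose_mat U * U = 1\<^sub>m n \<and> transpose_mat V * V = 1\<^sub>m m \<and>
       (\<forall>i<n. \<forall>j<m. i \<noteq> j \<longrightarrow> S $$ (i, j) = 0) \<and>
       (\<forall>i<min n m. 0 \<le> S $$ (i, i)) \<and>
       (\<forall>i j. i \<le> j \<longrightarrow> j < min n m \<longrightarrow> S $$ (j, j) \<le> S $$ (i, i)) \<and>
       A = U * S * transpose_mat V)"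

text \<open>Singular values (0-indexed, nonincreasing) of a matrix: the diagonal of the
  middle factor of a full SVD (they are uniquely determined).\<close>
definition singular_values :: "real mat \<Rightarrow> nat \<Rightarrow> real" where
  "singular_values M = (SOME z. \<exists>U S V. is_svd M U S V \<and>
       (\<forall>i. z i = (if i < min (dim_row M) (dim_col M) then S $$ (i, i) else 0)))"

definition vnorm :: "real vec \<Rightarrow> real" where
  "vnorm x = sqrt (x \<bullet> x)"

definition spec_norm :: "real mat \<Rightarrow> real" where
  "spec_norm M = Sup {vnorm (M *\<^sub>v x) | x. x \<in> carrier_vec (dim_col M) \<and> vnorm x = 1}"

definition sin_theta :: "real mat \<Rightarrow> real mat \<Rightarrow> real mat" where
  "sin_theta X Xt =
     (let r = dim_col X; z = singular_values (transpose_mat X * Xt) in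
       mat r r (\<lambda>(i, j). if i = j then sqrt (1 - (z i)\<^sup>2) else 0))"

definition cols_upto :: "nat \<Rightarrow> 'a mat \<Rightarrow> 'a mat" where
  "cols_upto k M = mat (dim_row M) k (\<lambda>(i, j). M $$ (i, j))"

definition cols_from :: "nat \<Rightarrow> 'a mat \<Rightarrow> 'a mat" where
  "cols_from k M = mat (dim_row M) (dim_col M - k) (\<lambda>(i, j). M $$ (i, j + k))"

end

theory Submission
  imports Defs "Jordan_Normal_Form.Spectral_Radius"
begin

(* Write X = U2^T Ut1 and Y = V2^T Vt1.  Since U^T Ut1 has orthonormal columns, every unit
   vector q satisfies |U1^T Ut1 q|^2 + |X q|^2 = 1; applied to the right singular vectors of
   U1^T Ut1 this gives ||sin Theta(U1, Ut1)|| <= ||X||, and likewise ||sin Theta(V1, Vt1)|| <= ||Y||.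
   Comparing the SVDs of A and A + E gives X St1 = S2 Y + U2^T E Vt1 with the diagonal blocks
   St1 = diag(st_1, ..., st_r) and S2 = diag(s_(r+1), ...); hence
   st_r ||X|| <= s_(r+1) ||Y|| + ||E||, and, splitting Vt1 along V1 and V2,
   st_r ||X|| <= (s_(r+1) + ||a22||) ||Y|| + ||a21||.  Transposing everything gives the same
   inequalities with X and Y exchanged.  Weyl's inequality st_r >= s_r - ||E|| turns these
   coupled scalar inequalities into both bounds.  As the singular values in sin Theta are read
   off an arbitrary SVD, we also show that every real square matrix has one, deflating a top
   eigenvector of M^T M with Householder reflections. *)

section \<open>Euclidean norm and spectral norm\<close>

lemma scalar_prod_self_eq_sum: "(x :: real vec) \<bullet> x = (\<Sum>i<dim_vec x. (x $ i)\<^sup>2)"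
  unfolding scalar_prod_def by (simp add: power2_eq_square atLeast0LessThan)

lemma scalar_prod_self_nonneg: "0 \<le> (x :: real vec) \<bullet> x"
  by (simp add: scalar_prod_self_eq_sum sum_nonneg)

lemma scalar_prod_self_eq_0:
  assumes "x \<in> carrier_vec n" and "(x :: real vec) \<bullet> x = 0"
  shows "x = 0\<^sub>v n"
proof -
  have "\<forall>i\<in>{..<dim_vec x}. (x $ i)\<^sup>2 = 0"
    using assms(2) unfolding scalar_prod_self_eq_sum by (subst sum_nonneg_eq_0_iff[symmetric]) auto
  then show ?thesis using assms(1) by (intro eq_vecI) auto
qed

lemma vnorm_nonneg: "0 \<le> vnorm x"
  unfolding vnorm_def by (simp add: scalar_prod_self_nonneg)

lemma vnorm_square: "(vnorm x)\<^sup>2 = x \<bullet> x"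
  unfolding vnorm_def using scalar_prod_self_nonneg by simp

lemma vnorm_square_sum: "x \<in> carrier_vec n \<Longrightarrow> (vnorm x)\<^sup>2 = (\<Sum>i<n. (x $ i)\<^sup>2)"
  using vnorm_square scalar_prod_self_eq_sum by auto

lemma vnorm_le_iff_square_le: "vnorm x \<le> vnorm y \<longleftrightarrow> (vnorm x)\<^sup>2 \<le> (vnorm y)\<^sup>2"
  using vnorm_nonneg by (simp add: abs_le_square_iff[symmetric])

lemma vnorm_zero_vec [simp]: "vnorm (0\<^sub>v n) = 0"
  unfolding vnorm_def by simp

lemma vnorm_eq_0_iff: "x \<in> carrier_vec n \<Longrightarrow> vnorm x = 0 \<longleftrightarrow> x = 0\<^sub>v n"
  using scalar_prod_self_eq_0[of x n] vnorm_square[of x] by auto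

lemma vnorm_pos: "x \<in> carrier_vec n \<Longrightarrow> x \<noteq> 0\<^sub>v n \<Longrightarrow> 0 < vnorm x"
  using vnorm_eq_0_iff[of x n] vnorm_nonneg[of x] by linarith

lemma vnorm_unit_vec: "i < n \<Longrightarrow> vnorm (unit_vec n i :: real vec) = 1"
  unfolding vnorm_def by simp

lemma vnorm_smult: "vnorm (c \<cdot>\<^sub>v x) = \<bar>c\<bar> * vnorm x"
proof -
  have "(c \<cdot>\<^sub>v x) \<bullet> (c \<cdot>\<^sub>v x) = c\<^sup>2 * (x \<bullet> x)"
    unfolding scalar_prod_def by (simp add: sum_distrib_left power2_eq_square algebra_simps)
  then show ?thesis unfolding vnorm_def by (simp add: real_sqrt_mult)
qed

lemma vnorm_uminus: "vnorm (- x) = vnorm x"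
  unfolding vnorm_def scalar_prod_def by simp

lemma vnorm_normalize:
  assumes "x \<in> carrier_vec n" and "x \<noteq> 0\<^sub>v n"
  shows "vnorm ((1 / vnorm x) \<cdot>\<^sub>v x) = 1"
  using vnorm_pos[OF assms] by (simp add: vnorm_smult)

lemma cauchy_schwarz_square:
  fixes x y :: "real vec"
  assumes x: "x \<in> carrier_vec n" and y: "y \<in> carrier_vec n"
  shows "(x \<bullet> y)\<^sup>2 \<le> (x \<bullet> x) * (y \<bullet> y)"
proof (cases "y \<bullet> y = 0")
  case True
  then show ?thesis using scalar_prod_self_eq_0[OF y] x by (simp add: scalar_prod_self_nonneg)
next
  case False
  define a b c where "a = x \<bullet> x" and "b = y \<bullet> y" and "c = x \<bullet> y"
  have sums: "a = (\<Sum>i<n. x$i * x$i)" "b = (\<Sum>i<n. y$i * y$i)" "c = (\<Sum>i<n. x$i * y$i)"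
    using x y unfolding a_def b_def c_def scalar_prod_def by (auto simp: atLeast0LessThan)
  have "0 \<le> (\<Sum>i<n. (b * x$i - c * y$i)\<^sup>2)" by (intro sum_nonneg) auto
  also have "\<dots> = (\<Sum>i<n. b*b*(x$i*x$i) - 2*b*c*(x$i*y$i) + c*c*(y$i*y$i))"
    by (intro sum.cong) (auto simp: power2_eq_square algebra_simps)
  also have "\<dots> = b*b*(\<Sum>i<n. x$i*x$i) - 2*b*c*(\<Sum>i<n. x$i*y$i) + c*c*(\<Sum>i<n. y$i*y$i)"
    by (simp add: sum.distrib sum_subtractf sum_distrib_left)
  also have "\<dots> = b * (a*b - c*c)"
    unfolding sums[symmetric] by (simp add: algebra_simps)
  finally have "0 \<le> b * (a*b - c*c)" .
  moreover have "0 < b" using False scalar_prod_self_nonneg[of y] b_def by simp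
  ultimately show ?thesis unfolding a_def b_def c_def by (simp add: zero_le_mult_iff power2_eq_square)
qed

lemma cauchy_schwarz:
  fixes x y :: "real vec"
  assumes "x \<in> carrier_vec n" and "y \<in> carrier_vec n"
  shows "\<bar>x \<bullet> y\<bar> \<le> vnorm x * vnorm y"
proof -
  have "\<bar>x \<bullet> y\<bar> = sqrt ((x \<bullet> y)\<^sup>2)" by simp
  also have "\<dots> \<le> sqrt ((x \<bullet> x) * (y \<bullet> y))"
    using cauchy_schwarz_square[OF assms] by (rule real_sqrt_le_mono)
  finally show ?thesis unfolding vnorm_def by (simp add: real_sqrt_mult)
qed

lemma vnorm_triangle:
  fixes x y :: "real vec"
  assumes x: "x \<in> carrier_vec n" and y: "y \<in> carrier_vec n"
  shows "vnorm (x + y) \<le> vnorm x + vnorm y"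
proof -
  have "(vnorm (x + y))\<^sup>2 = x \<bullet> x + 2 * (x \<bullet> y) + y \<bullet> y"
    using x y by (simp add: vnorm_square add_scalar_prod_distrib[of _ n] scalar_prod_add_distrib[of _ n]
        comm_scalar_prod[of y n x])
  also have "\<dots> \<le> (vnorm x)\<^sup>2 + 2 * (vnorm x * vnorm y) + (vnorm y)\<^sup>2"
    using cauchy_schwarz[OF x y] by (simp add: vnorm_square)
  also have "\<dots> = (vnorm x + vnorm y)\<^sup>2" by (simp add: power2_eq_square algebra_simps)
  finally show ?thesis
    using vnorm_nonneg by (metis abs_le_square_iff abs_of_nonneg add_nonneg_nonneg)
qed

lemma vnorm_reverse_triangle:
  fixes x y :: "real vec"
  assumes x: "x \<in> carrier_vec n" and y: "y \<in> carrier_vec n"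
  shows "vnorm x - vnorm y \<le> vnorm (x + y)"
proof -
  have "x = (x + y) + (- y)" using x y by auto
  then have "vnorm x \<le> vnorm (x + y) + vnorm (- y)"
    using vnorm_triangle[of "x + y" n "- y"] x y by (metis add_carrier_vec uminus_carrier_vec)
  then show ?thesis by (simp add: vnorm_uminus)
qed

lemma vnorm_append_square:
  assumes "v \<in> carrier_vec n1" and "w \<in> carrier_vec n2"
  shows "(vnorm (v @\<^sub>v w))\<^sup>2 = (vnorm v)\<^sup>2 + (vnorm w)\<^sup>2"
  using scalar_prod_append[OF assms assms] by (simp add: vnorm_square)

lemma vnorm_append_zero [simp]:
  "vnorm (v @\<^sub>v 0\<^sub>v n) = vnorm v" "vnorm (0\<^sub>v n @\<^sub>v v) = vnorm v"
  using vnorm_append_square[of v "dim_vec v" "0\<^sub>v n" n] vnorm_append_square[of "0\<^sub>v n" n v "dim_vec v"]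
    vnorm_nonneg by (auto simp: power2_eq_iff_nonneg)

lemma vnorm_vec_first_last_square:
  assumes "v \<in> carrier_vec (k + l)"
  shows "(vnorm (vec_first v k))\<^sup>2 + (vnorm (vec_last v l))\<^sup>2 = (vnorm v)\<^sup>2"
  using vnorm_append_square[of "vec_first v k" k "vec_last v l" l] vec_first_last_append[OF assms]
  by simp

lemma mult_mat_zero_vec [simp]: "A \<in> carrier_mat n m \<Longrightarrow> A *\<^sub>v 0\<^sub>v m = (0\<^sub>v n :: 'a :: semiring_0 vec)"
  by (intro eq_vecI) auto

lemma vnorm_mult_mat_vec_square_le:
  fixes M :: "real mat"
  assumes M: "M \<in> carrier_mat n m" and x: "x \<in> carrier_vec m"
  shows "(vnorm (M *\<^sub>v x))\<^sup>2 \<le> (\<Sum>i<n. row M i \<bullet> row M i) * (vnorm x)\<^sup>2"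
proof -
  have "(vnorm (M *\<^sub>v x))\<^sup>2 = (\<Sum>i<n. (row M i \<bullet> x)\<^sup>2)"
    using M x by (simp add: vnorm_square_sum[of _ n])
  also have "\<dots> \<le> (\<Sum>i<n. (row M i \<bullet> row M i) * (x \<bullet> x))"
    using M x by (intro sum_mono cauchy_schwarz_square[of _ m]) auto
  finally show ?thesis by (simp add: sum_distrib_right vnorm_square)
qed

lemma bdd_above_spec_norm:
  fixes M :: "real mat"
  assumes M: "M \<in> carrier_mat n m"
  shows "bdd_above {vnorm (M *\<^sub>v x) | x. x \<in> carrier_vec (dim_col M) \<and> vnorm x = 1}"
proof (rule bdd_aboveI[of _ "sqrt (\<Sum>i<n. row M i \<bullet> row M i)"], clarify)
  fix x :: "real vec" assume "x \<in> carrier_vec (dim_col M)" and "vnorm x = 1"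
  then have "(vnorm (M *\<^sub>v x))\<^sup>2 \<le> (\<Sum>i<n. row M i \<bullet> row M i)"
    using vnorm_mult_mat_vec_square_le[OF M, of x] M by simp
  then show "vnorm (M *\<^sub>v x) \<le> sqrt (\<Sum>i<n. row M i \<bullet> row M i)"
    using real_le_rsqrt by blast
qed

lemma spec_norm_mult_vec_le:
  fixes M :: "real mat"
  assumes M: "M \<in> carrier_mat n m" and x: "x \<in> carrier_vec m"
  shows "vnorm (M *\<^sub>v x) \<le> spec_norm M * vnorm x"
proof (cases "x = 0\<^sub>v m")
  case True
  then show ?thesis using M by simp
next
  case False
  define y where "y = (1 / vnorm x) \<cdot>\<^sub>v x"
  have "vnorm (M *\<^sub>v y) \<le> spec_norm M"
    unfolding spec_norm_def
    by (rule cSup_upper[OF _ bdd_above_spec_norm[OF M]])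
      (use M x False vnorm_normalize[OF x False] in \<open>auto simp: y_def\<close>)
  moreover have "M *\<^sub>v y = (1 / vnorm x) \<cdot>\<^sub>v (M *\<^sub>v x)"
    unfolding y_def by (rule mult_mat_vec[OF M x])
  ultimately show ?thesis
    using vnorm_pos[OF x False] by (simp add: vnorm_smult field_simps)
qed

lemma spec_norm_nonneg:
  fixes M :: "real mat"
  assumes M: "M \<in> carrier_mat n m" and "0 < m"
  shows "0 \<le> spec_norm M"
  using spec_norm_mult_vec_le[OF M unit_vec_carrier, of 0] vnorm_nonneg[of "M *\<^sub>v unit_vec m 0"]
    vnorm_unit_vec[OF \<open>0 < m\<close>] by (metis mult.right_neutral order.trans)

lemma spec_norm_leI:
  fixes M :: "real mat"
  assumes M: "M \<in> carrier_mat n m" and "0 < m"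
    and le: "\<And>x. x \<in> carrier_vec m \<Longrightarrow> vnorm (M *\<^sub>v x) \<le> c * vnorm x"
  shows "spec_norm M \<le> c"
  unfolding spec_norm_def
proof (rule cSup_least)
  show "{vnorm (M *\<^sub>v x) |x. x \<in> carrier_vec (dim_col M) \<and> vnorm x = 1} \<noteq> {}"
    using M \<open>0 < m\<close> by (auto intro!: exI[of _ "unit_vec m 0"] simp: vnorm_unit_vec)
qed (use M le in fastforce)

lemma spec_norm_transpose_le:
  fixes M :: "real mat"
  assumes M: "M \<in> carrier_mat n m" and "0 < n" and "0 < m"
  shows "spec_norm (transpose_mat M) \<le> spec_norm M"
proof (rule spec_norm_leI[of _ m n])
  fix x :: "real vec" assume x: "x \<in> carrier_vec n"
  define y where "y = transpose_mat M *\<^sub>v x"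
  have y: "y \<in> carrier_vec m" using M x unfolding y_def by simp
  have "(vnorm y)\<^sup>2 = x \<bullet> (M *\<^sub>v y)"
    unfolding vnorm_square y_def by (rule transpose_vec_mult_scalar[OF M _ x]) (use M x in simp)
  also have "\<dots> \<le> vnorm x * (spec_norm M * vnorm y)"
    using cauchy_schwarz[OF x, of "M *\<^sub>v y"] spec_norm_mult_vec_le[OF M y] M y vnorm_nonneg[of x]
    by (smt (verit) mult_left_mono mult_mat_vec_carrier)
  finally have "vnorm y * vnorm y \<le> vnorm y * (spec_norm M * vnorm x)"
    by (simp add: power2_eq_square algebra_simps)
  then show "vnorm (transpose_mat M *\<^sub>v x) \<le> spec_norm M * vnorm x"
    using spec_norm_nonneg[OF M \<open>0 < m\<close>] vnorm_nonneg[of x] vnorm_nonneg[of y]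
    unfolding y_def[symmetric] by (cases "vnorm y = 0") auto
qed (use M \<open>0 < n\<close> in auto)

lemma spec_norm_transpose:
  fixes M :: "real mat"
  assumes "M \<in> carrier_mat n m" and "0 < n" and "0 < m"
  shows "spec_norm (transpose_mat M) = spec_norm M"
  using spec_norm_transpose_le[OF assms] spec_norm_transpose_le[of "transpose_mat M" m n] assms
  by fastforce

lemma vnorm_vec_divide_le:
  assumes w: "w \<in> carrier_vec r" and "0 < t" and t: "\<And>i. i < r \<Longrightarrow> t \<le> d i"
  shows "vnorm (vec r (\<lambda>i. w $ i / d i)) \<le> vnorm w / t"
proof -
  have "(vnorm (vec r (\<lambda>i. w $ i / d i)))\<^sup>2 = (\<Sum>i<r. (w $ i / d i)\<^sup>2)"
    by (simp add: vnorm_square_sum[of _ r])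
  also have "\<dots> \<le> (\<Sum>i<r. (w $ i / t)\<^sup>2)"
  proof (rule sum_mono)
    fix i assume "i \<in> {..<r}"
    then have "t \<le> d i" using t by simp
    then have "t\<^sup>2 \<le> (d i)\<^sup>2" and "0 < (d i)\<^sup>2 * t\<^sup>2"
      using \<open>0 < t\<close> by (simp_all add: power_mono)
    then show "(w $ i / d i)\<^sup>2 \<le> (w $ i / t)\<^sup>2"
      unfolding power_divide by (intro divide_left_mono) auto
  qed
  also have "\<dots> = (vnorm w / t)\<^sup>2"
    using vnorm_square_sum[OF w] by (simp add: power_divide sum_divide_distrib)
  finally show ?thesis using \<open>0 < t\<close> vnorm_nonneg by (auto intro: power2_le_imp_le)
qed

lemma spec_norm_mult_diag_le:
  fixes X :: "real mat"
  assumes X: "X \<in> carrier_mat p r" and "0 < r" and t: "0 \<le> t" "\<And>i. i < r \<Longrightarrow> t \<le> d i" and "0 \<le> K"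
    and le: "\<And>c. c \<in> carrier_vec r \<Longrightarrow> vnorm (X *\<^sub>v vec r (\<lambda>i. d i * c $ i)) \<le> K * vnorm c"
  shows "t * spec_norm X \<le> K"
proof (cases "t = 0")
  case False
  then have "0 < t" using t by simp
  have "spec_norm X \<le> K / t"
  proof (rule spec_norm_leI[OF X \<open>0 < r\<close>])
    fix w :: "real vec" assume w: "w \<in> carrier_vec r"
    define c where "c = vec r (\<lambda>i. w $ i / d i)"
    have "vec r (\<lambda>i. d i * c $ i) = w"
    proof (rule eq_vecI)
      fix i assume "i < dim_vec w"
      then have "0 < d i" using w t(2)[of i] \<open>0 < t\<close> by simp
      then show "vec r (\<lambda>i. d i * c $ i) $ i = w $ i" using w \<open>i < dim_vec w\<close> unfolding c_def by simp
    qed (use w in simp)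
    then have "vnorm (X *\<^sub>v w) \<le> K * vnorm c" using le[of c] unfolding c_def by simp
    also have "\<dots> \<le> K * (vnorm w / t)"
      unfolding c_def using vnorm_vec_divide_le[OF w \<open>0 < t\<close> t(2)] \<open>0 \<le> K\<close> by (rule mult_left_mono)
    finally show "vnorm (X *\<^sub>v w) \<le> K / t * vnorm w" by simp
  qed
  then show ?thesis using \<open>0 < t\<close> by (simp add: field_simps)
qed (use \<open>0 \<le> K\<close> in simp)

lemma orthogonal_mat_right:
  fixes Q :: "real mat"
  assumes "Q \<in> carrier_mat k k" and "transpose_mat Q * Q = 1\<^sub>m k"
  shows "Q * transpose_mat Q = 1\<^sub>m k"
  using mat_mult_left_right_inverse[of "transpose_mat Q" k Q] assms by simp

lemma orthogonal_mult_vec_cancel: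
  fixes Q :: "real mat"
  assumes Q: "Q \<in> carrier_mat k k" and o: "transpose_mat Q * Q = 1\<^sub>m k" and x: "x \<in> carrier_vec k"
  shows "Q *\<^sub>v (transpose_mat Q *\<^sub>v x) = x" and "transpose_mat Q *\<^sub>v (Q *\<^sub>v x) = x"
  using orthogonal_mat_right[OF Q o] o Q x
  by (auto simp flip: assoc_mult_mat_vec[of _ k k _ k])

lemma orthogonal_mult_cancel:
  fixes Q X :: "real mat"
  assumes Q: "Q \<in> carrier_mat k k" and o: "transpose_mat Q * Q = 1\<^sub>m k" and X: "X \<in> carrier_mat k n"
  shows "Q * (transpose_mat Q * X) = X" and "transpose_mat Q * (Q * X) = X"
  using orthogonal_mat_right[OF Q o] o Q X
  by (auto simp flip: assoc_mult_mat[of _ k k _ k _ n])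

lemma orthogonal_conj_cancel:
  fixes M H K :: "real mat"
  assumes "M \<in> carrier_mat k k"
    and "H \<in> carrier_mat k k" "transpose_mat H * H = 1\<^sub>m k"
    and "K \<in> carrier_mat k k" "transpose_mat K * K = 1\<^sub>m k"
  shows "H * (transpose_mat H * M * K) * transpose_mat K = M"
  using assms
  by (simp add: assoc_mult_mat[of _ k k _ k _ k] orthogonal_mult_cancel(1) orthogonal_mat_right)

lemma orthogonal_mult:
  fixes H K :: "real mat"
  assumes H: "H \<in> carrier_mat k k" "transpose_mat H * H = 1\<^sub>m k"
    and K: "K \<in> carrier_mat k k" "transpose_mat K * K = 1\<^sub>m k"
  shows "transpose_mat (H * K) * (H * K) = 1\<^sub>m k"
proof -
  have "transpose_mat (H * K) * (H * K) = transpose_mat K * (transpose_mat H * (H * K))"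
    using H K by (simp add: transpose_mult[of _ k k _ k] assoc_mult_mat[of _ k k _ k _ k])
  then show ?thesis using orthogonal_mult_cancel(2)[OF H, of K k] K by simp
qed

lemma vnorm_isometry:
  fixes Q :: "real mat"
  assumes Q: "Q \<in> carrier_mat n k" and o: "transpose_mat Q * Q = 1\<^sub>m k" and x: "x \<in> carrier_vec k"
  shows "vnorm (Q *\<^sub>v x) = vnorm x"
proof -
  have "(Q *\<^sub>v x) \<bullet> (Q *\<^sub>v x) = (transpose_mat Q *\<^sub>v (Q *\<^sub>v x)) \<bullet> x"
    by (rule transpose_vec_mult_scalar[OF Q x, symmetric]) (use Q x in simp)
  also have "transpose_mat Q *\<^sub>v (Q *\<^sub>v x) = x"
    using o Q x by (simp flip: assoc_mult_mat_vec[of _ k n _ k])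
  finally show ?thesis unfolding vnorm_def by simp
qed

lemma vnorm_orthogonal_transpose:
  fixes Q :: "real mat"
  assumes Q: "Q \<in> carrier_mat k k" and o: "transpose_mat Q * Q = 1\<^sub>m k" and x: "x \<in> carrier_vec k"
  shows "vnorm (transpose_mat Q *\<^sub>v x) = vnorm x"
  using vnorm_isometry[of "transpose_mat Q" k k x] orthogonal_mat_right[OF Q o] Q x by simp

lemma mult3_mult_vec:
  assumes "A \<in> carrier_mat n1 n2" "B \<in> carrier_mat n2 n3" "C \<in> carrier_mat n3 n4" "x \<in> carrier_vec n4"
  shows "(A * B * C) *\<^sub>v x = A *\<^sub>v (B *\<^sub>v (C *\<^sub>v x))"
  using assms by (simp add: assoc_mult_mat_vec[of _ n1 n2 _ n4])

lemma transpose_mult3: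
  fixes A B C :: "real mat"
  assumes "A \<in> carrier_mat n1 n2" "B \<in> carrier_mat n2 n3" "C \<in> carrier_mat n3 n4"
  shows "transpose_mat (A * B * C) = transpose_mat C * transpose_mat B * transpose_mat A"
proof -
  have "transpose_mat (A * B * C) = transpose_mat C * transpose_mat (A * B)"
    using assms by (intro transpose_mult) auto
  also have "transpose_mat (A * B) = transpose_mat B * transpose_mat A"
    using assms by (intro transpose_mult) auto
  finally show ?thesis using assms by (simp add: assoc_mult_mat[of _ n4 n3 _ n2 _ n1])
qed

lemma cols_upto_dim [simp]: "dim_row (cols_upto r U) = dim_row U" "dim_col (cols_upto r U) = r"
  unfolding cols_upto_def by simp_all

lemma cols_from_dim [simp]:
  "dim_row (cols_from r U) = dim_row U" "dim_col (cols_from r U) = dim_col U - r"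
  unfolding cols_from_def by simp_all

lemma cols_upto_carrier: "U \<in> carrier_mat n k \<Longrightarrow> cols_upto r U \<in> carrier_mat n r"
  by auto

lemma cols_from_carrier: "U \<in> carrier_mat n k \<Longrightarrow> cols_from r U \<in> carrier_mat n (k - r)"
  by auto

lemma cols_upto_mult_vec:
  fixes U :: "real mat"
  assumes U: "U \<in> carrier_mat n k" and c: "c \<in> carrier_vec r" and "r \<le> k"
  shows "cols_upto r U *\<^sub>v c = U *\<^sub>v (c @\<^sub>v 0\<^sub>v (k - r))"
proof (rule eq_vecI)
  fix i assume "i < dim_vec (U *\<^sub>v (c @\<^sub>v 0\<^sub>v (k - r)))"
  then have i: "i < n" using U by simp
  have "(U *\<^sub>v (c @\<^sub>v 0\<^sub>v (k - r))) $ i = (\<Sum>j\<in>{0..<r} \<union> {r..<k}. U $$ (i, j) * (c @\<^sub>v 0\<^sub>v (k - r)) $ j)"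
    using U c i \<open>r \<le> k\<close> by (simp add: scalar_prod_def ivl_disj_un_two(3))
  also have "\<dots> = (\<Sum>j<r. U $$ (i, j) * c $ j)"
    using c by (subst sum.union_disjoint) (auto simp: atLeast0LessThan intro!: sum.neutral)
  finally show "(cols_upto r U *\<^sub>v c) $ i = (U *\<^sub>v (c @\<^sub>v 0\<^sub>v (k - r))) $ i"
    using U c i by (simp add: scalar_prod_def cols_upto_def atLeast0LessThan)
qed (use U in auto)

lemma cols_from_mult_vec:
  fixes U :: "real mat"
  assumes U: "U \<in> carrier_mat n k" and d: "d \<in> carrier_vec (k - r)" and "r \<le> k"
  shows "cols_from r U *\<^sub>v d = U *\<^sub>v (0\<^sub>v r @\<^sub>v d)"
proof (rule eq_vecI)
  fix i assume "i < dim_vec (U *\<^sub>v (0\<^sub>v r @\<^sub>v d))"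
  then have i: "i < n" using U by simp
  have "(U *\<^sub>v (0\<^sub>v r @\<^sub>v d)) $ i = (\<Sum>j\<in>{0..<r} \<union> {r..<k}. U $$ (i, j) * (0\<^sub>v r @\<^sub>v d) $ j)"
    using U d i \<open>r \<le> k\<close> by (simp add: scalar_prod_def ivl_disj_un_two(3))
  also have "\<dots> = (\<Sum>j\<in>{r..<k}. U $$ (i, j) * d $ (j - r))"
    using d by (subst sum.union_disjoint) auto
  also have "\<dots> = (\<Sum>j<k - r. U $$ (i, j + r) * d $ j)"
    using \<open>r \<le> k\<close> sum.shift_bounds_nat_ivl[of "\<lambda>j. U $$ (i, j) * d $ (j - r)" 0 r "k - r"]
    by (simp add: atLeast0LessThan)
  finally show "(cols_from r U *\<^sub>v d) $ i = (U *\<^sub>v (0\<^sub>v r @\<^sub>v d)) $ i"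
    using U d i by (simp add: scalar_prod_def cols_from_def atLeast0LessThan)
qed (use U in auto)

lemma transpose_cols_upto_mult_vec:
  fixes U :: "real mat"
  assumes "U \<in> carrier_mat n k" and "x \<in> carrier_vec n" and "r \<le> k"
  shows "transpose_mat (cols_upto r U) *\<^sub>v x = vec_first (transpose_mat U *\<^sub>v x) r"
  using assms by (intro eq_vecI) (auto simp: vec_first_def cols_upto_def scalar_prod_def)

lemma transpose_cols_from_mult_vec:
  fixes U :: "real mat"
  assumes "U \<in> carrier_mat n k" and "x \<in> carrier_vec n" and "r \<le> k"
  shows "transpose_mat (cols_from r U) *\<^sub>v x = vec_last (transpose_mat U *\<^sub>v x) (k - r)"
  using assms by (intro eq_vecI) (auto simp: vec_last_def cols_from_def scalar_prod_def add.commute)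

lemma vec_first_last_split:
  fixes v :: "real vec"
  assumes "v \<in> carrier_vec k" and "r \<le> k"
  shows "v = (vec_first v r @\<^sub>v 0\<^sub>v (k - r)) + (0\<^sub>v r @\<^sub>v vec_last v (k - r))"
  using assms by (intro eq_vecI) (auto simp: vec_first_def vec_last_def)

lemma append_zero_vec_carrier:
  "c \<in> carrier_vec r \<Longrightarrow> r \<le> m \<Longrightarrow> c @\<^sub>v 0\<^sub>v (m - r) \<in> carrier_vec m"
  "d \<in> carrier_vec (m - r) \<Longrightarrow> r \<le> m \<Longrightarrow> 0\<^sub>v r @\<^sub>v d \<in> carrier_vec m"
  by (metis append_carrier_vec le_add_diff_inverse zero_carrier_vec)+

lemma cols_split_mult_vec:
  fixes V :: "real mat"
  assumes V: "V \<in> carrier_mat m m" "transpose_mat V * V = 1\<^sub>m m" and x: "x \<in> carrier_vec m" and "r \<le> m"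
  shows "x = cols_upto r V *\<^sub>v (transpose_mat (cols_upto r V) *\<^sub>v x)
      + cols_from r V *\<^sub>v (transpose_mat (cols_from r V) *\<^sub>v x)"
proof -
  define y where "y = transpose_mat V *\<^sub>v x"
  have y: "y \<in> carrier_vec m" unfolding y_def using V x by simp
  have "x = V *\<^sub>v ((vec_first y r @\<^sub>v 0\<^sub>v (m - r)) + (0\<^sub>v r @\<^sub>v vec_last y (m - r)))"
    using vec_first_last_split[OF y \<open>r \<le> m\<close>] orthogonal_mult_vec_cancel(1)[OF V x] unfolding y_def by simp
  also have "\<dots> = V *\<^sub>v (vec_first y r @\<^sub>v 0\<^sub>v (m - r)) + V *\<^sub>v (0\<^sub>v r @\<^sub>v vec_last y (m - r))"
    using \<open>r \<le> m\<close> y append_zero_vec_carrier(1)[of "vec_first y r" r m]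
      append_zero_vec_carrier(2)[of "vec_last y (m - r)" m r]
    by (intro mult_add_distrib_mat_vec[OF V(1)]) auto
  finally show ?thesis
    using cols_upto_mult_vec[OF V(1) _ \<open>r \<le> m\<close>] cols_from_mult_vec[OF V(1) _ \<open>r \<le> m\<close>]
      transpose_cols_upto_mult_vec[OF V(1) x \<open>r \<le> m\<close>] transpose_cols_from_mult_vec[OF V(1) x \<open>r \<le> m\<close>]
    unfolding y_def by simp
qed

section \<open>Singular value decompositions\<close>

definition sorted_diagonal_mat :: "real mat \<Rightarrow> bool" where
  "sorted_diagonal_mat S \<longleftrightarrow> diagonal_mat S \<and>
     (\<forall>i<min (dim_row S) (dim_col S). 0 \<le> S $$ (i, i)) \<and>
     (\<forall>i j. i \<le> j \<longrightarrow> j < min (dim_row S) (dim_col S) \<longrightarrow> S $$ (j, j) \<le> S $$ (i, i))"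

lemma is_svd_iff:
  assumes "A \<in> carrier_mat n m"
  shows "is_svd A U S V \<longleftrightarrow> U \<in> carrier_mat n n \<and> V \<in> carrier_mat m m \<and> S \<in> carrier_mat n m \<and>
     transpose_mat U * U = 1\<^sub>m n \<and> transpose_mat V * V = 1\<^sub>m m \<and> sorted_diagonal_mat S \<and>
     A = U * S * transpose_mat V"
  using assms unfolding is_svd_def sorted_diagonal_mat_def diagonal_mat_def Let_def by auto

lemma is_svdD:
  assumes "is_svd A U S V" and "A \<in> carrier_mat n m"
  shows "U \<in> carrier_mat n n" "V \<in> carrier_mat m m" "S \<in> carrier_mat n m"
    "transpose_mat U * U = 1\<^sub>m n" "transpose_mat V * V = 1\<^sub>m m" "sorted_diagonal_mat S"
    "A = U * S * transpose_mat V"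
  using assms is_svd_iff by auto

lemma sorted_diagonal_mat_transpose:
  "sorted_diagonal_mat S \<Longrightarrow> sorted_diagonal_mat (transpose_mat S)"
  unfolding sorted_diagonal_mat_def diagonal_mat_def by (auto simp: min.commute)

lemma sorted_diagonalD:
  assumes "S \<in> carrier_mat n m" and "sorted_diagonal_mat S"
  shows "i < min n m \<Longrightarrow> 0 \<le> S $$ (i, i)"
    and "i \<le> j \<Longrightarrow> j < min n m \<Longrightarrow> S $$ (j, j) \<le> S $$ (i, i)"
  using assms unfolding sorted_diagonal_mat_def by auto

lemma is_svd_transpose:
  assumes svd: "is_svd A U S V" and A: "A \<in> carrier_mat n m"
  shows "is_svd (transpose_mat A) V (transpose_mat S) U"
proof -
  note d = is_svdD[OF assms]
  have "transpose_mat A = V * transpose_mat S * transpose_mat U"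
    using transpose_mult3[OF d(1) d(3), of "transpose_mat V" m] d(2) d(7) by simp
  then show ?thesis
    using is_svd_iff[of "transpose_mat A" m n] A d sorted_diagonal_mat_transpose by auto
qed

lemma diagonal_mult_vec_index:
  fixes S :: "real mat"
  assumes S: "S \<in> carrier_mat n m" and "diagonal_mat S" and v: "v \<in> carrier_vec m" and i: "i < n"
  shows "(S *\<^sub>v v) $ i = (if i < m then S $$ (i, i) * v $ i else 0)"
proof -
  have "(S *\<^sub>v v) $ i = (\<Sum>j\<in>{0..<m}. S $$ (i, j) * v $ j)"
    using S v i by (simp add: scalar_prod_def)
  also have "\<dots> = (\<Sum>j\<in>{0..<m}. if j = i then S $$ (i, i) * v $ i else 0)"
    using assms unfolding diagonal_mat_def by (intro sum.cong) auto
  finally show ?thesis by simp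
qed

lemma diagonal_mult_unit_vec:
  fixes S :: "real mat"
  assumes "S \<in> carrier_mat n m" and "diagonal_mat S" and "i < n" and "i < m"
  shows "S *\<^sub>v unit_vec m i = S $$ (i, i) \<cdot>\<^sub>v unit_vec n i"
  using assms by (intro eq_vecI) (auto simp: diagonal_mult_vec_index diagonal_mat_def)

lemma complex_eigenvector_Re_Im:
  fixes G :: "real mat"
  assumes G: "G \<in> carrier_mat k k" and vc: "vc \<in> carrier_vec k"
    and ev: "map_mat complex_of_real G *\<^sub>v vc = l \<cdot>\<^sub>v vc"
  shows "G *\<^sub>v map_vec Re vc = Re l \<cdot>\<^sub>v map_vec Re vc - Im l \<cdot>\<^sub>v map_vec Im vc"
    and "G *\<^sub>v map_vec Im vc = Re l \<cdot>\<^sub>v map_vec Im vc + Im l \<cdot>\<^sub>v map_vec Re vc"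
proof -
  have entry: "l * vc $ i = (\<Sum>j\<in>{0..<k}. complex_of_real (G $$ (i, j)) * vc $ j)" if "i < k" for i
    using arg_cong[OF ev, of "\<lambda>w. w $ i"] G vc that by (simp add: scalar_prod_def)
  show "G *\<^sub>v map_vec Re vc = Re l \<cdot>\<^sub>v map_vec Re vc - Im l \<cdot>\<^sub>v map_vec Im vc"
    using G vc arg_cong[where f = Re, OF entry] by (intro eq_vecI) (auto simp: scalar_prod_def Re_sum)
  show "G *\<^sub>v map_vec Im vc = Re l \<cdot>\<^sub>v map_vec Im vc + Im l \<cdot>\<^sub>v map_vec Re vc"
    using G vc arg_cong[where f = Im, OF entry] by (intro eq_vecI) (auto simp: scalar_prod_def Im_sum)
qed

lemma symmetric_scalar_prod_swap:
  fixes G :: "real mat"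
  assumes G: "G \<in> carrier_mat k k" and sym: "transpose_mat G = G"
    and a: "a \<in> carrier_vec k" and b: "b \<in> carrier_vec k"
  shows "b \<bullet> (G *\<^sub>v a) = a \<bullet> (G *\<^sub>v b)"
proof -
  have "b \<bullet> (G *\<^sub>v a) = (G *\<^sub>v b) \<bullet> a"
    using transpose_vec_mult_scalar[OF G a b] sym by simp
  also have "\<dots> = a \<bullet> (G *\<^sub>v b)" using G a b by (intro comm_scalar_prod[of _ k]) auto
  finally show ?thesis .
qed

lemma real_symmetric_has_eigenvalue:
  fixes G :: "real mat"
  assumes G: "G \<in> carrier_mat k k" and sym: "transpose_mat G = G" and "0 < k"
  shows "\<exists>\<mu>. eigenvalue G \<mu>"
proof -
  have "map_mat complex_of_real G \<in> carrier_mat k k" using G by simp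
  from spectrum_non_empty[OF this \<open>0 < k\<close>]
  obtain l vc where "eigenvector (map_mat complex_of_real G) vc l"
    unfolding spectrum_def eigenvalue_def by auto
  then have vc: "vc \<in> carrier_vec k" "vc \<noteq> 0\<^sub>v k" and ev: "map_mat complex_of_real G *\<^sub>v vc = l \<cdot>\<^sub>v vc"
    unfolding eigenvector_def using G by auto
  define a b where "a = map_vec Re vc" and "b = map_vec Im vc"
  have a: "a \<in> carrier_vec k" and b: "b \<in> carrier_vec k" unfolding a_def b_def using vc by auto
  note Gab = complex_eigenvector_Re_Im[OF G vc(1) ev, folded a_def b_def]
  have ab_ne: "a \<noteq> 0\<^sub>v k \<or> b \<noteq> 0\<^sub>v k"
  proof (rule ccontr)
    assume "\<not> ?thesis"
    then have "vc = 0\<^sub>v k"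
      using vc(1) unfolding a_def b_def by (intro eq_vecI) (auto simp: complex_eq_iff dest!: vec_eq_iff[THEN iffD1])
    with vc(2) show False by simp
  qed
  have "Im l * (a \<bullet> a + b \<bullet> b) = 0"
    using symmetric_scalar_prod_swap[OF G sym a b] comm_scalar_prod[OF b a] a b
    by (simp add: Gab scalar_prod_minus_distrib[of _ k] scalar_prod_add_distrib[of _ k] algebra_simps)
  moreover have "a \<bullet> a + b \<bullet> b \<noteq> 0"
    using ab_ne scalar_prod_self_eq_0[OF a] scalar_prod_self_eq_0[OF b]
      scalar_prod_self_nonneg[of a] scalar_prod_self_nonneg[of b] by linarith
  ultimately have "Im l = 0" by simp
  then have "G *\<^sub>v a = Re l \<cdot>\<^sub>v a" "G *\<^sub>v b = Re l \<cdot>\<^sub>v b"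
    using Gab a b by (auto intro!: eq_vecI)
  then show ?thesis
    using ab_ne a b G unfolding eigenvalue_def eigenvector_def by blast
qed

lemma real_symmetric_max_eigenpair:
  fixes G :: "real mat"
  assumes G: "G \<in> carrier_mat k k" and sym: "transpose_mat G = G" and "0 < k"
  obtains l v where "v \<in> carrier_vec k" "vnorm v = 1" "G *\<^sub>v v = l \<cdot>\<^sub>v v"
    "\<And>\<mu> w. w \<in> carrier_vec k \<Longrightarrow> w \<noteq> 0\<^sub>v k \<Longrightarrow> G *\<^sub>v w = \<mu> \<cdot>\<^sub>v w \<Longrightarrow> \<mu> \<le> l"
proof -
  have fin: "finite (spectrum G)" by (rule card_finite_spectrum(1)[OF G])
  have "spectrum G \<noteq> {}"
    using real_symmetric_has_eigenvalue[OF assms] unfolding spectrum_def by auto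
  then have "Max (spectrum G) \<in> spectrum G" using fin by simp
  then obtain v0 where "v0 \<in> carrier_vec k" "v0 \<noteq> 0\<^sub>v k" "G *\<^sub>v v0 = Max (spectrum G) \<cdot>\<^sub>v v0"
    unfolding spectrum_def eigenvalue_def eigenvector_def using G by auto
  moreover have "\<mu> \<le> Max (spectrum G)"
    if "w \<in> carrier_vec k" "w \<noteq> 0\<^sub>v k" "G *\<^sub>v w = \<mu> \<cdot>\<^sub>v w" for \<mu> w
  proof -
    have "\<mu> \<in> spectrum G"
      using that G unfolding spectrum_def eigenvalue_def eigenvector_def by auto
    then show ?thesis using fin by simp
  qed
  ultimately show ?thesis
    using that[of "(1 / vnorm v0) \<cdot>\<^sub>v v0" "Max (spectrum G)"] vnorm_normalize mult_mat_vec[OF G]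
    by (simp add: smult_smult_assoc mult.commute)
qed

text \<open>For \<open>w = 0\<close> the factor \<open>2 / (w \<bullet> w)\<close> is \<open>0\<close> by division by zero, so no case
  distinction is needed: \<open>householder 0\<close> is the identity.\<close>

definition householder :: "real vec \<Rightarrow> real mat" where
  "householder w = mat (dim_vec w) (dim_vec w)
     (\<lambda>(i, j). (if i = j then 1 else 0) - 2 / (w \<bullet> w) * (w $ i * w $ j))"

lemma householder_carrier [simp]: "w \<in> carrier_vec k \<Longrightarrow> householder w \<in> carrier_mat k k"
  unfolding householder_def by simp

lemma householder_transpose: "transpose_mat (householder w) = householder w"
  unfolding householder_def by (rule eq_matI) auto

lemma householder_mult_vec:
  assumes w: "w \<in> carrier_vec k" and x: "x \<in> carrier_vec k"
  shows "householder w *\<^sub>v x = x - (2 / (w \<bullet> w) * (w \<bullet> x)) \<cdot>\<^sub>v w"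
proof (rule eq_vecI)
  fix i assume "i < dim_vec (x - (2 / (w \<bullet> w) * (w \<bullet> x)) \<cdot>\<^sub>v w)"
  then have i: "i < k" using w by simp
  have "(householder w *\<^sub>v x) $ i
      = (\<Sum>j\<in>{0..<k}. (if i = j then x $ j else 0) - 2 / (w \<bullet> w) * w $ i * (w $ j * x $ j))"
    using i w x unfolding householder_def by (auto simp: scalar_prod_def algebra_simps intro!: sum.cong)
  also have "\<dots> = x $ i - 2 / (w \<bullet> w) * w $ i * (w \<bullet> x)"
    using i w x by (simp add: sum_subtractf sum_distrib_left scalar_prod_def)
  finally show "(householder w *\<^sub>v x) $ i = (x - (2 / (w \<bullet> w) * (w \<bullet> x)) \<cdot>\<^sub>v w) $ i"
    using i x w by simp
qed (use w x in \<open>auto simp: householder_def\<close>)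

lemma householder_involution:
  assumes w: "w \<in> carrier_vec k" and x: "x \<in> carrier_vec k"
  shows "householder w *\<^sub>v (householder w *\<^sub>v x) = x"
proof -
  define c where "c = 2 / (w \<bullet> w)"
  have c: "c * (2 - c * (w \<bullet> w)) = 0" unfolding c_def by auto
  have "w \<bullet> (x - (c * (w \<bullet> x)) \<cdot>\<^sub>v w) = w \<bullet> x - c * (w \<bullet> x) * (w \<bullet> w)"
    using w x by (simp add: scalar_prod_minus_distrib[of _ k])
  then have "householder w *\<^sub>v (householder w *\<^sub>v x)
      = x - (c * (w \<bullet> x)) \<cdot>\<^sub>v w - (c * (w \<bullet> x - c * (w \<bullet> x) * (w \<bullet> w))) \<cdot>\<^sub>v w"
    using w x by (simp add: householder_mult_vec c_def)
  also have "\<dots> = x"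
  proof (rule eq_vecI)
    fix i assume "i < dim_vec x"
    have "x $ i - c * (w \<bullet> x) * w $ i - c * (w \<bullet> x - c * (w \<bullet> x) * (w \<bullet> w)) * w $ i
        = x $ i - (w \<bullet> x) * w $ i * (c * (2 - c * (w \<bullet> w)))"
      by (simp add: algebra_simps)
    then show "(x - (c * (w \<bullet> x)) \<cdot>\<^sub>v w - (c * (w \<bullet> x - c * (w \<bullet> x) * (w \<bullet> w))) \<cdot>\<^sub>v w) $ i = x $ i"
      using \<open>i < dim_vec x\<close> x w c by simp
  qed (use x w in simp)
  finally show ?thesis .
qed

lemma eq_mat_by_mult_vecI:
  fixes A B :: "real mat"
  assumes A: "A \<in> carrier_mat n k" and B: "B \<in> carrier_mat n k"
    and eq: "\<And>x. x \<in> carrier_vec k \<Longrightarrow> A *\<^sub>v x = B *\<^sub>v x"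
  shows "A = B"
proof (rule eq_matI)
  fix i j assume "i < dim_row B" and "j < dim_col B"
  then show "A $$ (i, j) = B $$ (i, j)"
    using arg_cong[OF eq[OF unit_vec_carrier[of k j]], of "\<lambda>v. v $ i"] A B by simp
qed (use A B in auto)

lemma householder_orthogonal:
  assumes w: "w \<in> carrier_vec k"
  shows "transpose_mat (householder w) * householder w = 1\<^sub>m k"
proof (rule eq_mat_by_mult_vecI[of _ k k])
  fix x :: "real vec" assume x: "x \<in> carrier_vec k"
  have "(householder w * householder w) *\<^sub>v x = householder w *\<^sub>v (householder w *\<^sub>v x)"
    using w x by (intro assoc_mult_mat_vec[of _ k k _ k]) auto
  then show "(transpose_mat (householder w) * householder w) *\<^sub>v x = 1\<^sub>m k *\<^sub>v x"
    using householder_involution[OF w x] x by (simp add: householder_transpose)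
qed (use w in \<open>auto simp: householder_transpose intro: mult_carrier_mat[of _ k k _ k]\<close>)

lemma householder_unit_vec:
  assumes v: "v \<in> carrier_vec k" and "0 < k" and "vnorm v = 1"
  shows "householder (unit_vec k 0 - v) *\<^sub>v unit_vec k 0 = v"
proof -
  define w where "w = unit_vec k 0 - v"
  have w: "w \<in> carrier_vec k" unfolding w_def using v by simp
  have "v \<bullet> v = 1" using \<open>vnorm v = 1\<close> vnorm_square[of v] by simp
  then have ww: "w \<bullet> w = 2 * (1 - v $ 0)" and we: "w \<bullet> unit_vec k 0 = 1 - v $ 0"
    unfolding w_def using v \<open>0 < k\<close>
    by (simp_all add: minus_scalar_prod_distrib[of _ k] scalar_prod_minus_distrib[of _ k]
        comm_scalar_prod[of v k "unit_vec k 0"])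
  show ?thesis
  proof (cases "w \<bullet> w = 0")
    case True
    then have "w = 0\<^sub>v k" using scalar_prod_self_eq_0[OF w] by simp
    have "v = unit_vec k 0"
    proof (rule eq_vecI)
      fix i assume "i < dim_vec (unit_vec k 0)"
      then show "v $ i = unit_vec k 0 $ i"
        using arg_cong[OF \<open>w = 0\<^sub>v k\<close>, of "\<lambda>x. x $ i"] v unfolding w_def by simp
    qed (use v in simp)
    moreover have "householder w *\<^sub>v unit_vec k 0 = unit_vec k 0"
      using householder_mult_vec[OF w unit_vec_carrier[of k 0]] \<open>w = 0\<^sub>v k\<close>
      by (intro eq_vecI) auto
    ultimately show ?thesis unfolding w_def by simp
  next
    case False
    then have "2 / (w \<bullet> w) * (w \<bullet> unit_vec k 0) = 1" unfolding ww we by simp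
    then have "householder w *\<^sub>v unit_vec k 0 = unit_vec k 0 - w"
      using householder_mult_vec[OF w unit_vec_carrier[of k 0]] w by (intro eq_vecI) auto
    also have "\<dots> = v" unfolding w_def using v by (intro eq_vecI) auto
    finally show ?thesis unfolding w_def .
  qed
qed

lemma orthogonal_mat_with_first_col:
  assumes "v \<in> carrier_vec k" and "0 < k" and "vnorm v = 1"
  obtains H where "H \<in> carrier_mat k k" "transpose_mat H * H = 1\<^sub>m k" "H *\<^sub>v unit_vec k 0 = v"
proof -
  have w: "unit_vec k 0 - v \<in> carrier_vec k" using assms(1) by simp
  show thesis
    by (rule that[OF householder_carrier[OF w] householder_orthogonal[OF w] householder_unit_vec[OF assms]])
qed

lemma transpose_kernel_unit_vec:
  fixes M :: "real mat"
  assumes M: "M \<in> carrier_mat k k" and v: "v \<in> carrier_vec k" "v \<noteq> 0\<^sub>v k" and Mv: "M *\<^sub>v v = 0\<^sub>v k"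
  obtains u where "u \<in> carrier_vec k" "vnorm u = 1" "transpose_mat M *\<^sub>v u = 0\<^sub>v k"
proof -
  have "det M = 0" using det_0_iff_vec_prod_zero[OF M] v Mv by blast
  then have "det (transpose_mat M) = 0" using det_transpose[OF M] by simp
  then obtain u0 where u0: "u0 \<in> carrier_vec k" "u0 \<noteq> 0\<^sub>v k" "transpose_mat M *\<^sub>v u0 = 0\<^sub>v k"
    using det_0_iff_vec_prod_zero[of "transpose_mat M" k] M by auto
  show thesis
  proof (rule that)
    show "(1 / vnorm u0) \<cdot>\<^sub>v u0 \<in> carrier_vec k" using u0 by simp
    show "vnorm ((1 / vnorm u0) \<cdot>\<^sub>v u0) = 1" by (rule vnorm_normalize[OF u0(1,2)])
    show "transpose_mat M *\<^sub>v ((1 / vnorm u0) \<cdot>\<^sub>v u0) = 0\<^sub>v k"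
      using mult_mat_vec[of "transpose_mat M" k k u0] M u0 by (auto intro!: eq_vecI)
  qed
qed

lemma exists_unit_vec_leading_entries_zero:
  fixes W :: "real mat"
  assumes W: "W \<in> carrier_mat m r" and "1 \<le> r" and "r \<le> m"
  obtains c where "c \<in> carrier_vec r" "vnorm c = 1" "\<And>i. i < r - 1 \<Longrightarrow> (W *\<^sub>v c) $ i = 0"
proof -
  define K where "K = mat\<^sub>r r r (\<lambda>i. if i = r - 1 then 0\<^sub>v r else row W i)"
  have K: "K \<in> carrier_mat r r" unfolding K_def by simp
  have "det K = 0" unfolding K_def using assms by (intro det_row_0) auto
  then obtain c0 where c0: "c0 \<in> carrier_vec r" "c0 \<noteq> 0\<^sub>v r" "K *\<^sub>v c0 = 0\<^sub>v r"
    using det_0_iff_vec_prod_zero[OF K] by blast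
  show thesis
  proof (rule that)
    show "(1 / vnorm c0) \<cdot>\<^sub>v c0 \<in> carrier_vec r" "vnorm ((1 / vnorm c0) \<cdot>\<^sub>v c0) = 1"
      using c0 vnorm_normalize by auto
    fix i assume "i < r - 1"
    then have "(W *\<^sub>v c0) $ i = (K *\<^sub>v c0) $ i" unfolding K_def using W c0 assms by simp
    then show "(W *\<^sub>v ((1 / vnorm c0) \<cdot>\<^sub>v c0)) $ i = 0"
      using mult_mat_vec[OF W c0(1)] c0 \<open>i < r - 1\<close> assms W by simp
  qed
qed

lemma gram_eigenvector_singular_pair:
  fixes M :: "real mat"
  assumes M: "M \<in> carrier_mat k k" and v: "v \<in> carrier_vec k" and nv: "vnorm v = 1"
    and ev: "(transpose_mat M * M) *\<^sub>v v = l \<cdot>\<^sub>v v"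
  obtains u where "0 \<le> l" "u \<in> carrier_vec k" "vnorm u = 1"
    "M *\<^sub>v v = sqrt l \<cdot>\<^sub>v u" "transpose_mat M *\<^sub>v u = sqrt l \<cdot>\<^sub>v v"
proof -
  have MTMv: "transpose_mat M *\<^sub>v (M *\<^sub>v v) = l \<cdot>\<^sub>v v" using ev M v by simp
  have "(vnorm (M *\<^sub>v v))\<^sup>2 = (transpose_mat M *\<^sub>v (M *\<^sub>v v)) \<bullet> v"
    unfolding vnorm_square using M v by (intro transpose_vec_mult_scalar[symmetric]) auto
  also have "\<dots> = l" using MTMv nv vnorm_square[of v] v by simp
  finally have norm_Mv: "vnorm (M *\<^sub>v v) = sqrt l" using vnorm_nonneg by (metis real_sqrt_unique)
  have l: "0 \<le> l" using norm_Mv vnorm_nonneg by (metis real_sqrt_ge_0_iff)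
  show thesis
  proof (cases "l = 0")
    case True
    then have "M *\<^sub>v v = 0\<^sub>v k" using norm_Mv vnorm_eq_0_iff[of "M *\<^sub>v v" k] M v by simp
    moreover have "v \<noteq> 0\<^sub>v k" using nv by auto
    ultimately obtain u where "u \<in> carrier_vec k" "vnorm u = 1" "transpose_mat M *\<^sub>v u = 0\<^sub>v k"
      using transpose_kernel_unit_vec[OF M v] by blast
    with \<open>M *\<^sub>v v = 0\<^sub>v k\<close> True v show thesis by (intro that[of u]) (auto intro!: eq_vecI)
  next
    case False
    then have s: "0 < sqrt l" using l by simp
    define u where "u = (1 / sqrt l) \<cdot>\<^sub>v (M *\<^sub>v v)"
    show thesis
    proof (rule that[of u])
      show "u \<in> carrier_vec k" unfolding u_def using M v by simp
      show "vnorm u = 1" unfolding u_def vnorm_smult norm_Mv using s by simp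
      show "M *\<^sub>v v = sqrt l \<cdot>\<^sub>v u" unfolding u_def using s M v by (intro eq_vecI) auto
      have "transpose_mat M *\<^sub>v u = (1 / sqrt l) \<cdot>\<^sub>v (l \<cdot>\<^sub>v v)"
        unfolding u_def MTMv[symmetric] using M v by (intro mult_mat_vec) auto
      also have "\<dots> = (l / sqrt l) \<cdot>\<^sub>v v" by (intro eq_vecI) auto
      also have "l / sqrt l = sqrt l" by (rule real_div_sqrt[OF l])
      finally show "transpose_mat M *\<^sub>v u = sqrt l \<cdot>\<^sub>v v" .
    qed (use l in simp)
  qed
qed

definition prepend_diag :: "real \<Rightarrow> real mat \<Rightarrow> real mat" where
  "prepend_diag a B = four_block_mat (a \<cdot>\<^sub>m 1\<^sub>m 1) (0\<^sub>m 1 (dim_col B)) (0\<^sub>m (dim_row B) 1) B"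

lemma prepend_diag_carrier [simp]:
  "B \<in> carrier_mat p q \<Longrightarrow> prepend_diag a B \<in> carrier_mat (Suc p) (Suc q)"
  unfolding prepend_diag_def using four_block_carrier_mat[of "a \<cdot>\<^sub>m 1\<^sub>m 1" 1 1 B p q] by auto

lemma prepend_diag_dim [simp]:
  "dim_row (prepend_diag a B) = Suc (dim_row B)" "dim_col (prepend_diag a B) = Suc (dim_col B)"
  unfolding prepend_diag_def by simp_all

lemma prepend_diag_index:
  assumes "i < Suc (dim_row B)" and "j < Suc (dim_col B)"
  shows "prepend_diag a B $$ (i, j) =
    (if i = 0 \<and> j = 0 then a else if i = 0 \<or> j = 0 then 0 else B $$ (i - 1, j - 1))"
  using assms unfolding prepend_diag_def by auto

lemma prepend_diag_mult:
  assumes "B \<in> carrier_mat p q" and "D \<in> carrier_mat q s"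
  shows "prepend_diag a B * prepend_diag c D = prepend_diag (a * c) (B * D)"
  unfolding prepend_diag_def using assms
  by (subst mult_four_block_mat[of _ 1 1 _ q _ p _ _ 1 _ s]) auto

lemma prepend_diag_transpose: "transpose_mat (prepend_diag a B) = prepend_diag a (transpose_mat B)"
  unfolding prepend_diag_def by (rule eq_matI) auto

lemma prepend_diag_one: "prepend_diag 1 (1\<^sub>m p) = 1\<^sub>m (Suc p)"
  unfolding prepend_diag_def by (rule eq_matI) auto

lemma prepend_diag_mult_vec:
  assumes "B \<in> carrier_mat p p" and "x \<in> carrier_vec p"
  shows "prepend_diag a B *\<^sub>v (0\<^sub>v 1 @\<^sub>v x) = 0\<^sub>v 1 @\<^sub>v (B *\<^sub>v x)"
proof -
  have dim: "dim_row B = p" "dim_col B = p" using assms by auto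
  show ?thesis
    unfolding prepend_diag_def dim using assms
    by (subst mult_mat_vec_split[of _ 1 _ p]) (auto intro!: eq_vecI)
qed

lemma prepend_diagI:
  fixes M :: "real mat"
  assumes M: "M \<in> carrier_mat (Suc k) (Suc k)"
    and col: "M *\<^sub>v unit_vec (Suc k) 0 = s \<cdot>\<^sub>v unit_vec (Suc k) 0"
    and row: "transpose_mat M *\<^sub>v unit_vec (Suc k) 0 = s \<cdot>\<^sub>v unit_vec (Suc k) 0"
  shows "M = prepend_diag s (mat k k (\<lambda>(i, j). M $$ (Suc i, Suc j)))"
proof -
  have col0: "M $$ (i, 0) = (if i = 0 then s else 0)" if "i < Suc k" for i
    using arg_cong[OF col, of "\<lambda>v. v $ i"] M that by simp
  have row0: "M $$ (0, j) = (if j = 0 then s else 0)" if "j < Suc k" for j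
    using arg_cong[OF row, of "\<lambda>v. v $ j"] M that by simp
  show ?thesis
  proof (rule eq_matI)
    fix i j assume "i < dim_row (prepend_diag s (mat k k (\<lambda>(i, j). M $$ (Suc i, Suc j))))"
      and "j < dim_col (prepend_diag s (mat k k (\<lambda>(i, j). M $$ (Suc i, Suc j))))"
    then have "i < Suc k" "j < Suc k" by simp_all
    then show "M $$ (i, j) = prepend_diag s (mat k k (\<lambda>(i, j). M $$ (Suc i, Suc j))) $$ (i, j)"
      using col0 row0 by (cases i; cases j) (auto simp: prepend_diag_index)
  qed (use M in auto)
qed

lemma sorted_diagonal_prepend_diag:
  assumes Z: "Z \<in> carrier_mat k k" and sorted: "sorted_diagonal_mat Z" and "0 \<le> s"
    and top: "0 < k \<Longrightarrow> Z $$ (0, 0) \<le> s"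
  shows "sorted_diagonal_mat (prepend_diag s Z)"
proof -
  have "prepend_diag s Z $$ (j, j) \<le> prepend_diag s Z $$ (i, i)" if "i \<le> j" "j < Suc k" for i j
  proof (cases j)
    case (Suc j')
    then have "Z $$ (j', j') \<le> Z $$ (i - 1, i - 1)" "Z $$ (j', j') \<le> Z $$ (0, 0)"
      using sorted that Z unfolding sorted_diagonal_mat_def by auto
    then show ?thesis using that Suc Z top by (auto simp: prepend_diag_index)
  qed (use that Z in \<open>auto simp: prepend_diag_index\<close>)
  then show ?thesis
    using assms unfolding sorted_diagonal_mat_def diagonal_mat_def by (auto simp: prepend_diag_index)
qed

lemma is_svd_prepend_diag:
  assumes svd: "is_svd M P Z Q" and M: "M \<in> carrier_mat k k" and "0 \<le> s"
    and "0 < k \<Longrightarrow> Z $$ (0, 0) \<le> s"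
  shows "is_svd (prepend_diag s M) (prepend_diag 1 P) (prepend_diag s Z) (prepend_diag 1 Q)"
proof -
  note d = is_svdD[OF svd M]
  have "prepend_diag 1 P * prepend_diag s Z * transpose_mat (prepend_diag 1 Q) = prepend_diag s M"
    using d by (simp add: prepend_diag_transpose prepend_diag_mult[of _ k k _ k])
  moreover have "transpose_mat (prepend_diag 1 Q) * prepend_diag 1 Q = 1\<^sub>m (Suc k)"
    "transpose_mat (prepend_diag 1 P) * prepend_diag 1 P = 1\<^sub>m (Suc k)"
    using d by (simp_all add: prepend_diag_transpose prepend_diag_mult[of _ k k _ k] prepend_diag_one)
  ultimately show ?thesis
    using d sorted_diagonal_prepend_diag[OF d(3,6) assms(3,4)] is_svd_iff[of "prepend_diag s M" "Suc k" "Suc k"] M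
    by simp
qed

lemma is_svd_orthogonal_mult:
  assumes svd: "is_svd M P Z Q" and M: "M \<in> carrier_mat k k"
    and H: "H \<in> carrier_mat k k" "transpose_mat H * H = 1\<^sub>m k"
    and K: "K \<in> carrier_mat k k" "transpose_mat K * K = 1\<^sub>m k"
  shows "is_svd (H * M * transpose_mat K) (H * P) Z (K * Q)"
proof -
  note d = is_svdD[OF svd M]
  have eq: "H * P * Z * transpose_mat (K * Q) = H * M * transpose_mat K"
    using d H K by (simp add: transpose_mult[of _ k k _ k] assoc_mult_mat[of _ k k _ k _ k])
  have N: "H * M * transpose_mat K \<in> carrier_mat k k" using H K M by simp
  have "H * P \<in> carrier_mat k k" "K * Q \<in> carrier_mat k k" using H K d(1,2) by auto
  then show ?thesis
    unfolding is_svd_iff[OF N]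
    using d(3,6) orthogonal_mult[OF H d(1,4)] orthogonal_mult[OF K d(2,5)] eq[symmetric] by blast
qed

lemma svd_mult_right_singular_vec:
  assumes svd: "is_svd M P Z Q" and M: "M \<in> carrier_mat k k" and i: "i < k"
  shows "M *\<^sub>v (Q *\<^sub>v unit_vec k i) = Z $$ (i, i) \<cdot>\<^sub>v (P *\<^sub>v unit_vec k i)"
proof -
  note d = is_svdD[OF svd M]
  have "M *\<^sub>v (Q *\<^sub>v unit_vec k i) = P *\<^sub>v (Z *\<^sub>v (transpose_mat Q *\<^sub>v (Q *\<^sub>v unit_vec k i)))"
    using d mult3_mult_vec[of P k k Z k "transpose_mat Q" k] by simp
  then show ?thesis
    using diagonal_mult_unit_vec[OF d(3) _ i i] orthogonal_mult_vec_cancel(2)[OF d(2,5) unit_vec_carrier]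
      d(1,3,6) unfolding sorted_diagonal_mat_def by (simp add: mult_mat_vec)
qed

lemma svd_gram_eigenvector:
  assumes svd: "is_svd M P Z Q" and M: "M \<in> carrier_mat k k" and i: "i < k"
  shows "(transpose_mat M * M) *\<^sub>v (Q *\<^sub>v unit_vec k i) = (Z $$ (i, i))\<^sup>2 \<cdot>\<^sub>v (Q *\<^sub>v unit_vec k i)"
proof -
  note d = is_svdD[OF svd M]
  have "transpose_mat M *\<^sub>v (P *\<^sub>v unit_vec k i) = Z $$ (i, i) \<cdot>\<^sub>v (Q *\<^sub>v unit_vec k i)"
    using svd_mult_right_singular_vec[OF is_svd_transpose[OF svd M] _ i] M d(3) i by simp
  then show ?thesis
    using svd_mult_right_singular_vec[OF svd M i] M d(1,2)
    by (simp add: mult_mat_vec power2_eq_square smult_smult_assoc)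
qed

lemma orthogonal_conj_singular_pair:
  fixes M Hu Hv :: "real mat"
  assumes M: "M \<in> carrier_mat k k"
    and Hu: "Hu \<in> carrier_mat k k" "transpose_mat Hu * Hu = 1\<^sub>m k" "Hu *\<^sub>v unit_vec k 0 = u"
    and Hv: "Hv \<in> carrier_mat k k" "transpose_mat Hv * Hv = 1\<^sub>m k" "Hv *\<^sub>v unit_vec k 0 = v"
    and Mv: "M *\<^sub>v v = s \<cdot>\<^sub>v u" and MTu: "transpose_mat M *\<^sub>v u = s \<cdot>\<^sub>v v"
  shows "(transpose_mat Hu * M * Hv) *\<^sub>v unit_vec k 0 = s \<cdot>\<^sub>v unit_vec k 0"
    and "transpose_mat (transpose_mat Hu * M * Hv) *\<^sub>v unit_vec k 0 = s \<cdot>\<^sub>v unit_vec k 0"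
proof -
  let ?e = "unit_vec k 0"
  have u: "u \<in> carrier_vec k" and v: "v \<in> carrier_vec k" using Hu Hv by auto
  have "(transpose_mat Hu * M * Hv) *\<^sub>v ?e = transpose_mat Hu *\<^sub>v (s \<cdot>\<^sub>v u)"
    using Hu Hv M Mv mult3_mult_vec[of "transpose_mat Hu" k k M k Hv k] by simp
  also have "\<dots> = s \<cdot>\<^sub>v (transpose_mat Hu *\<^sub>v (Hu *\<^sub>v ?e))"
    using Hu u by (simp add: mult_mat_vec)
  finally show "(transpose_mat Hu * M * Hv) *\<^sub>v ?e = s \<cdot>\<^sub>v ?e"
    using orthogonal_mult_vec_cancel(2)[OF Hu(1,2) unit_vec_carrier] by simp
  have "transpose_mat (transpose_mat Hu * M * Hv) = transpose_mat Hv * transpose_mat M * Hu"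
    using transpose_mult3[of "transpose_mat Hu" k k M k Hv k] Hu M Hv by simp
  then have "transpose_mat (transpose_mat Hu * M * Hv) *\<^sub>v ?e = transpose_mat Hv *\<^sub>v (s \<cdot>\<^sub>v v)"
    using Hu Hv M MTu mult3_mult_vec[of "transpose_mat Hv" k k "transpose_mat M" k Hu k] by simp
  also have "\<dots> = s \<cdot>\<^sub>v (transpose_mat Hv *\<^sub>v (Hv *\<^sub>v ?e))"
    using Hv v by (simp add: mult_mat_vec)
  finally show "transpose_mat (transpose_mat Hu * M * Hv) *\<^sub>v ?e = s \<cdot>\<^sub>v ?e"
    using orthogonal_mult_vec_cancel(2)[OF Hv(1,2) unit_vec_carrier] by simp
qed

lemma gram_orthogonal_conj:
  fixes M H K :: "real mat"
  assumes M: "M \<in> carrier_mat k k"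
    and H: "H \<in> carrier_mat k k" "transpose_mat H * H = 1\<^sub>m k"
    and K: "K \<in> carrier_mat k k" "transpose_mat K * K = 1\<^sub>m k"
    and x: "x \<in> carrier_vec k"
  shows "(transpose_mat M * M) *\<^sub>v (K *\<^sub>v x)
    = K *\<^sub>v ((transpose_mat (transpose_mat H * M * K) * (transpose_mat H * M * K)) *\<^sub>v x)"
proof -
  let ?N = "transpose_mat H * M * K"
  have N: "?N \<in> carrier_mat k k" using H M K by simp
  have "transpose_mat ?N = transpose_mat K * transpose_mat M * H"
    using transpose_mult3[of "transpose_mat H" k k M k K k] H M K by simp
  then have "(transpose_mat ?N * ?N) *\<^sub>v x
      = transpose_mat K *\<^sub>v (transpose_mat M *\<^sub>v (H *\<^sub>v (transpose_mat H *\<^sub>v (M *\<^sub>v (K *\<^sub>v x)))))"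
    using H M K x N mult3_mult_vec[of "transpose_mat H" k k M k K k x]
      mult3_mult_vec[of "transpose_mat K" k k "transpose_mat M" k H k]
    by (simp add: assoc_mult_mat_vec[of _ k k _ k])
  then show ?thesis
    using orthogonal_mult_vec_cancel(1)[OF H(1,2)] orthogonal_mult_vec_cancel(1)[OF K(1,2)] H M K x
    by simp
qed

lemma eigenvalue_prepend_diag_gram:
  fixes M' :: "real mat"
  assumes M': "M' \<in> carrier_mat k k" and w: "w \<in> carrier_vec k"
    and ev: "(transpose_mat M' * M') *\<^sub>v w = \<mu> \<cdot>\<^sub>v w"
  shows "(transpose_mat (prepend_diag s M') * prepend_diag s M') *\<^sub>v (0\<^sub>v 1 @\<^sub>v w) = \<mu> \<cdot>\<^sub>v (0\<^sub>v 1 @\<^sub>v w)"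
proof -
  have "(transpose_mat (prepend_diag s M') * prepend_diag s M') *\<^sub>v (0\<^sub>v 1 @\<^sub>v w)
      = transpose_mat (prepend_diag s M') *\<^sub>v (prepend_diag s M' *\<^sub>v (0\<^sub>v 1 @\<^sub>v w))"
    using M' w append_carrier_vec[of "0\<^sub>v 1" 1 w k]
    by (intro assoc_mult_mat_vec[of _ "Suc k" "Suc k" _ "Suc k"]) auto
  also have "\<dots> = 0\<^sub>v 1 @\<^sub>v (transpose_mat M' *\<^sub>v (M' *\<^sub>v w))"
    using M' w prepend_diag_mult_vec[OF M' w] prepend_diag_mult_vec[of "transpose_mat M'" k "M' *\<^sub>v w"]
    by (simp add: prepend_diag_transpose)
  also have "\<dots> = \<mu> \<cdot>\<^sub>v (0\<^sub>v 1 @\<^sub>v w)" using ev M' w by (intro eq_vecI) auto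
  finally show ?thesis .
qed

lemma gram_eigenvector_deflated:
  fixes M M' H K :: "real mat"
  assumes M: "M \<in> carrier_mat (Suc k) (Suc k)" and M': "M' \<in> carrier_mat k k"
    and H: "H \<in> carrier_mat (Suc k) (Suc k)" "transpose_mat H * H = 1\<^sub>m (Suc k)"
    and K: "K \<in> carrier_mat (Suc k) (Suc k)" "transpose_mat K * K = 1\<^sub>m (Suc k)"
    and conj: "transpose_mat H * M * K = prepend_diag s M'"
    and w: "w \<in> carrier_vec k" and ev: "(transpose_mat M' * M') *\<^sub>v w = \<mu> \<cdot>\<^sub>v w"
  shows "(transpose_mat M * M) *\<^sub>v (K *\<^sub>v (0\<^sub>v 1 @\<^sub>v w)) = \<mu> \<cdot>\<^sub>v (K *\<^sub>v (0\<^sub>v 1 @\<^sub>v w))"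
proof -
  have w': "0\<^sub>v 1 @\<^sub>v w \<in> carrier_vec (Suc k)" using append_carrier_vec[of "0\<^sub>v 1" 1 w k] w by simp
  have "(transpose_mat M * M) *\<^sub>v (K *\<^sub>v (0\<^sub>v 1 @\<^sub>v w)) = K *\<^sub>v (\<mu> \<cdot>\<^sub>v (0\<^sub>v 1 @\<^sub>v w))"
    using gram_orthogonal_conj[OF M H K w'] eigenvalue_prepend_diag_gram[OF M' w ev, of s]
    unfolding conj by simp
  also have "\<dots> = \<mu> \<cdot>\<^sub>v (K *\<^sub>v (0\<^sub>v 1 @\<^sub>v w))" by (rule mult_mat_vec[OF K(1) w'])
  finally show ?thesis .
qed

lemma svd_deflation:
  fixes M :: "real mat"
  assumes M: "M \<in> carrier_mat (Suc k) (Suc k)"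
  obtains s M' Hu Hv where "0 \<le> s" "M' \<in> carrier_mat k k"
    "Hu \<in> carrier_mat (Suc k) (Suc k)" "transpose_mat Hu * Hu = 1\<^sub>m (Suc k)"
    "Hv \<in> carrier_mat (Suc k) (Suc k)" "transpose_mat Hv * Hv = 1\<^sub>m (Suc k)"
    "M = Hu * prepend_diag s M' * transpose_mat Hv"
    "\<And>\<mu> w. w \<in> carrier_vec k \<Longrightarrow> w \<noteq> 0\<^sub>v k \<Longrightarrow> (transpose_mat M' * M') *\<^sub>v w = \<mu> \<cdot>\<^sub>v w \<Longrightarrow> \<mu> \<le> s\<^sup>2"
proof -
  let ?K = "Suc k"
  have G: "transpose_mat M * M \<in> carrier_mat ?K ?K"
    and sym: "transpose_mat (transpose_mat M * M) = transpose_mat M * M"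
    using M by (auto simp: transpose_mult[of _ ?K ?K _ ?K])
  obtain l v where v: "v \<in> carrier_vec ?K" "vnorm v = 1" and Gv: "(transpose_mat M * M) *\<^sub>v v = l \<cdot>\<^sub>v v"
    and max: "\<And>\<mu> w. w \<in> carrier_vec ?K \<Longrightarrow> w \<noteq> 0\<^sub>v ?K \<Longrightarrow> (transpose_mat M * M) *\<^sub>v w = \<mu> \<cdot>\<^sub>v w \<Longrightarrow> \<mu> \<le> l"
    by (rule real_symmetric_max_eigenpair[OF G sym zero_less_Suc]) blast
  obtain u where l: "0 \<le> l" and u: "u \<in> carrier_vec ?K" "vnorm u = 1"
    and Mv: "M *\<^sub>v v = sqrt l \<cdot>\<^sub>v u" and MTu: "transpose_mat M *\<^sub>v u = sqrt l \<cdot>\<^sub>v v"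
    using gram_eigenvector_singular_pair[OF M v Gv] by blast
  obtain Hu where Hu: "Hu \<in> carrier_mat ?K ?K" "transpose_mat Hu * Hu = 1\<^sub>m ?K" "Hu *\<^sub>v unit_vec ?K 0 = u"
    using orthogonal_mat_with_first_col[OF u(1) _ u(2)] by blast
  obtain Hv where Hv: "Hv \<in> carrier_mat ?K ?K" "transpose_mat Hv * Hv = 1\<^sub>m ?K" "Hv *\<^sub>v unit_vec ?K 0 = v"
    using orthogonal_mat_with_first_col[OF v(1) _ v(2)] by blast
  define M' where "M' = mat k k (\<lambda>(i, j). (transpose_mat Hu * M * Hv) $$ (Suc i, Suc j))"
  have M': "M' \<in> carrier_mat k k" unfolding M'_def by simp
  have conj: "transpose_mat Hu * M * Hv = prepend_diag (sqrt l) M'"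
    unfolding M'_def using Hu Hv M
    by (intro prepend_diagI orthogonal_conj_singular_pair[OF M Hu Hv Mv MTu]) simp
  show thesis
  proof (rule that[OF _ M' Hu(1,2) Hv(1,2)])
    show "M = Hu * prepend_diag (sqrt l) M' * transpose_mat Hv"
      using orthogonal_conj_cancel[OF M Hu(1,2) Hv(1,2)] unfolding conj by simp
    fix \<mu> w assume w: "w \<in> carrier_vec k" "w \<noteq> 0\<^sub>v k" and ev: "(transpose_mat M' * M') *\<^sub>v w = \<mu> \<cdot>\<^sub>v w"
    have w': "0\<^sub>v 1 @\<^sub>v w \<in> carrier_vec ?K" using append_carrier_vec[of "0\<^sub>v 1" 1 w k] w by simp
    have "Hv *\<^sub>v (0\<^sub>v 1 @\<^sub>v w) \<noteq> 0\<^sub>v ?K"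
      using vnorm_isometry[OF Hv(1,2) w'] vnorm_pos[OF w] by auto
    then have "\<mu> \<le> l"
      using max[OF _ _ gram_eigenvector_deflated[OF M M' Hu(1,2) Hv(1,2) conj w(1) ev]] Hv(1) w' by simp
    then show "\<mu> \<le> (sqrt l)\<^sup>2" using l by simp
  qed (use l in simp)
qed

lemma svd_exists_square: "(M :: real mat) \<in> carrier_mat k k \<Longrightarrow> \<exists>P Z Q. is_svd M P Z Q"
proof (induction k arbitrary: M)
  case 0
  then have "is_svd M (1\<^sub>m 0) (1\<^sub>m 0) (1\<^sub>m 0)"
    unfolding is_svd_def Let_def by (auto intro: eq_matI)
  then show ?case by blast
next
  case (Suc k)
  obtain s M' Hu Hv where s: "0 \<le> s" and M': "M' \<in> carrier_mat k k"
    and Hu: "Hu \<in> carrier_mat (Suc k) (Suc k)" "transpose_mat Hu * Hu = 1\<^sub>m (Suc k)"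
    and Hv: "Hv \<in> carrier_mat (Suc k) (Suc k)" "transpose_mat Hv * Hv = 1\<^sub>m (Suc k)"
    and M: "M = Hu * prepend_diag s M' * transpose_mat Hv"
    and max: "\<And>\<mu> w. w \<in> carrier_vec k \<Longrightarrow> w \<noteq> 0\<^sub>v k \<Longrightarrow> (transpose_mat M' * M') *\<^sub>v w = \<mu> \<cdot>\<^sub>v w \<Longrightarrow> \<mu> \<le> s\<^sup>2"
    using svd_deflation[OF Suc.prems] by blast
  obtain P Z Q where svd: "is_svd M' P Z Q" using Suc.IH[OF M'] by blast
  have "Z $$ (0, 0) \<le> s" if "0 < k"
  proof -
    note d = is_svdD[OF svd M']
    have "Q *\<^sub>v unit_vec k 0 \<noteq> 0\<^sub>v k"
      using vnorm_isometry[OF d(2,5) unit_vec_carrier[of k 0]] vnorm_unit_vec[OF that] by auto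
    then have "(Z $$ (0, 0))\<^sup>2 \<le> s\<^sup>2" using max[OF _ _ svd_gram_eigenvector[OF svd M' that]] d(2) by simp
    moreover have "0 \<le> Z $$ (0, 0)" using sorted_diagonalD(1)[OF d(3,6)] that by simp
    ultimately show ?thesis using s power2_le_imp_le by blast
  qed
  from is_svd_orthogonal_mult[OF is_svd_prepend_diag[OF svd M' s this] prepend_diag_carrier[OF M'] Hu Hv]
  show ?case unfolding M by blast
qed

lemma vnorm_svd_mult_vec:
  assumes svd: "is_svd A U S V" and A: "A \<in> carrier_mat n m" and x: "x \<in> carrier_vec m"
  shows "vnorm (A *\<^sub>v x) = vnorm (S *\<^sub>v (transpose_mat V *\<^sub>v x))"
proof -
  note d = is_svdD[OF svd A]
  have "A *\<^sub>v x = U *\<^sub>v (S *\<^sub>v (transpose_mat V *\<^sub>v x))"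
    using d x mult3_mult_vec[of U n n S m "transpose_mat V" m x] by simp
  then show ?thesis using vnorm_isometry[OF d(1,4)] d x by simp
qed

lemma transpose_cols_from_svd_mult_vec:
  assumes svd: "is_svd A U S V" and A: "A \<in> carrier_mat n m" and x: "x \<in> carrier_vec m" and "r \<le> n"
  shows "transpose_mat (cols_from r U) *\<^sub>v (A *\<^sub>v x) = vec_last (S *\<^sub>v (transpose_mat V *\<^sub>v x)) (n - r)"
proof -
  note d = is_svdD[OF svd A]
  have "transpose_mat U *\<^sub>v (A *\<^sub>v x) = S *\<^sub>v (transpose_mat V *\<^sub>v x)"
    using d x mult3_mult_vec[of U n n S m "transpose_mat V" m x]
      orthogonal_mult_vec_cancel(2)[OF d(1,4), of "S *\<^sub>v (transpose_mat V *\<^sub>v x)"] by simp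
  then show ?thesis using transpose_cols_from_mult_vec[OF d(1) _ \<open>r \<le> n\<close>, of "A *\<^sub>v x"] A x by simp
qed

lemma svd_mult_cols_upto:
  assumes svd: "is_svd A U S V" and A: "A \<in> carrier_mat n m" and r: "r \<le> min n m"
    and c: "c \<in> carrier_vec r"
  shows "A *\<^sub>v (cols_upto r V *\<^sub>v c) = cols_upto r U *\<^sub>v vec r (\<lambda>i. S $$ (i, i) * c $ i)"
proof -
  note d = is_svdD[OF svd A]
  have c0: "c @\<^sub>v 0\<^sub>v (m - r) \<in> carrier_vec m" using append_zero_vec_carrier(1)[OF c] r by simp
  have diag: "diagonal_mat S" using d(6) unfolding sorted_diagonal_mat_def by simp
  have "S *\<^sub>v (c @\<^sub>v 0\<^sub>v (m - r)) = vec r (\<lambda>i. S $$ (i, i) * c $ i) @\<^sub>v 0\<^sub>v (n - r)"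
  proof (rule eq_vecI)
    fix i assume "i < dim_vec (vec r (\<lambda>i. S $$ (i, i) * c $ i) @\<^sub>v 0\<^sub>v (n - r))"
    then have i: "i < n" using r by auto
    show "(S *\<^sub>v (c @\<^sub>v 0\<^sub>v (m - r))) $ i = (vec r (\<lambda>i. S $$ (i, i) * c $ i) @\<^sub>v 0\<^sub>v (n - r)) $ i"
      unfolding diagonal_mult_vec_index[OF d(3) diag c0 i] using c r i by auto
  qed (use d(3) r in auto)
  moreover have "A *\<^sub>v (cols_upto r V *\<^sub>v c) = U *\<^sub>v (S *\<^sub>v (c @\<^sub>v 0\<^sub>v (m - r)))"
    using d c c0 r cols_upto_mult_vec[OF d(2) c] mult3_mult_vec[of U n n S m "transpose_mat V" m]
      orthogonal_mult_vec_cancel(2)[OF d(2,5) c0] by simp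
  ultimately show ?thesis using cols_upto_mult_vec[OF d(1), of _ r] r by simp
qed

lemma square_mult_le:
  fixes a b x :: real
  assumes "\<bar>a\<bar> \<le> b"
  shows "(a * x)\<^sup>2 \<le> b\<^sup>2 * x\<^sup>2"
  using assms by (simp add: power_mult_distrib abs_le_square_iff[symmetric] mult_right_mono)

lemma diagonal_mult_vec_square_sum:
  fixes S :: "real mat"
  assumes S: "S \<in> carrier_mat n m" and diag: "diagonal_mat S" and y: "y \<in> carrier_vec m"
  shows "(\<Sum>i\<in>{a..<n}. ((S *\<^sub>v y) $ i)\<^sup>2) = (\<Sum>i\<in>{a..<min n m}. (S $$ (i, i) * y $ i)\<^sup>2)"
proof -
  have "(\<Sum>i\<in>{a..<n}. ((S *\<^sub>v y) $ i)\<^sup>2) = (\<Sum>i\<in>{a..<n}. if i < m then (S $$ (i, i) * y $ i)\<^sup>2 else 0)"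
    by (intro sum.cong) (auto simp: diagonal_mult_vec_index[OF S diag y])
  also have "\<dots> = (\<Sum>i\<in>{a..<min n m}. if i < m then (S $$ (i, i) * y $ i)\<^sup>2 else 0)"
    by (intro sum.mono_neutral_right) auto
  finally show ?thesis by simp
qed

lemma vnorm_square_sum_atLeastLessThan:
  "v \<in> carrier_vec k \<Longrightarrow> (vnorm v)\<^sup>2 = (\<Sum>i\<in>{0..<k}. (v $ i)\<^sup>2)"
  by (simp add: vnorm_square_sum atLeast0LessThan)

lemma vnorm_vec_last_square_sum:
  assumes "v \<in> carrier_vec k" and "r \<le> k"
  shows "(vnorm (vec_last v (k - r)))\<^sup>2 = (\<Sum>i\<in>{r..<k}. (v $ i)\<^sup>2)"
  using assms sum.shift_bounds_nat_ivl[of "\<lambda>i. (v $ i)\<^sup>2" 0 r "k - r"]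
  by (simp add: vnorm_square_sum_atLeastLessThan[of _ "k - r"] vec_last_def add.commute)

lemma sorted_diagonal_tail_le:
  fixes S :: "real mat"
  assumes S: "S \<in> carrier_mat n m" and sorted: "sorted_diagonal_mat S"
    and y: "y \<in> carrier_vec m" and r: "r < min n m"
  shows "vnorm (vec_last (S *\<^sub>v y) (n - r)) \<le> S $$ (r, r) * vnorm (vec_last y (m - r))"
proof -
  have diag: "diagonal_mat S" and nonneg: "\<forall>i<min n m. 0 \<le> S $$ (i, i)"
    and mono: "\<forall>i j. i \<le> j \<longrightarrow> j < min n m \<longrightarrow> S $$ (j, j) \<le> S $$ (i, i)"
    using sorted S unfolding sorted_diagonal_mat_def by auto
  have "(vnorm (vec_last (S *\<^sub>v y) (n - r)))\<^sup>2 = (\<Sum>i\<in>{r..<min n m}. (S $$ (i, i) * y $ i)\<^sup>2)"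
    using vnorm_vec_last_square_sum[of "S *\<^sub>v y" n r] diagonal_mult_vec_square_sum[OF S diag y] S y r
    by simp
  also have "\<dots> \<le> (\<Sum>i\<in>{r..<min n m}. (S $$ (r, r))\<^sup>2 * (y $ i)\<^sup>2)"
    using nonneg mono by (intro sum_mono square_mult_le) auto
  also have "\<dots> \<le> (\<Sum>i\<in>{r..<m}. (S $$ (r, r))\<^sup>2 * (y $ i)\<^sup>2)"
    by (intro sum_mono2) auto
  also have "\<dots> = (S $$ (r, r) * vnorm (vec_last y (m - r)))\<^sup>2"
    using vnorm_vec_last_square_sum[OF y, of r] r by (simp add: sum_distrib_left power_mult_distrib)
  finally show ?thesis
    using nonneg r vnorm_nonneg by (auto intro: power2_le_imp_le)
qed

lemma sorted_diagonal_head_ge: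
  fixes S :: "real mat"
  assumes S: "S \<in> carrier_mat n m" and sorted: "sorted_diagonal_mat S"
    and c: "c \<in> carrier_vec r" and r: "1 \<le> r" "r \<le> min n m"
  shows "S $$ (r - 1, r - 1) * vnorm c \<le> vnorm (S *\<^sub>v (c @\<^sub>v 0\<^sub>v (m - r)))"
proof -
  let ?s = "S $$ (r - 1, r - 1)" and ?c = "c @\<^sub>v 0\<^sub>v (m - r)"
  have diag: "diagonal_mat S" and nonneg_all: "\<forall>i<min n m. 0 \<le> S $$ (i, i)"
    and mono_all: "\<forall>i j. i \<le> j \<longrightarrow> j < min n m \<longrightarrow> S $$ (j, j) \<le> S $$ (i, i)"
    using sorted S unfolding sorted_diagonal_mat_def by auto
  have "r - 1 < min n m" using r by auto
  then have nonneg: "0 \<le> ?s" and mono: "\<And>i. i < r \<Longrightarrow> ?s \<le> S $$ (i, i)"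
    using nonneg_all mono_all by auto
  have c': "?c \<in> carrier_vec m" using append_zero_vec_carrier(1)[OF c, of m] r by simp
  have "(?s * vnorm c)\<^sup>2 = (\<Sum>i\<in>{0..<r}. ?s\<^sup>2 * (c $ i)\<^sup>2)"
    using vnorm_square_sum_atLeastLessThan[OF c] by (simp add: power_mult_distrib sum_distrib_left)
  also have "\<dots> \<le> (\<Sum>i\<in>{0..<r}. (S $$ (i, i) * ?c $ i)\<^sup>2)"
    using nonneg mono c r by (intro sum_mono) (auto simp: power_mult_distrib mult_right_mono power_mono)
  also have "\<dots> \<le> (\<Sum>i\<in>{0..<min n m}. (S $$ (i, i) * ?c $ i)\<^sup>2)"
    using r by (intro sum_mono2) auto
  also have "\<dots> = (vnorm (S *\<^sub>v ?c))\<^sup>2"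
    using vnorm_square_sum_atLeastLessThan[of "S *\<^sub>v ?c" n] diagonal_mult_vec_square_sum[OF S diag c', of 0] S c'
    by simp
  finally show ?thesis using vnorm_nonneg by (auto intro: power2_le_imp_le)
qed

lemma sorted_diagonal_mult_vec_le:
  fixes S :: "real mat"
  assumes S: "S \<in> carrier_mat n m" and sorted: "sorted_diagonal_mat S"
    and u: "u \<in> carrier_vec m" and r: "r < min n m" and zero: "\<And>i. i < r \<Longrightarrow> u $ i = 0"
  shows "vnorm (S *\<^sub>v u) \<le> S $$ (r, r) * vnorm u"
proof -
  have diag: "diagonal_mat S" and nonneg: "\<forall>i<min n m. 0 \<le> S $$ (i, i)"
    and mono: "\<forall>i j. i \<le> j \<longrightarrow> j < min n m \<longrightarrow> S $$ (j, j) \<le> S $$ (i, i)"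
    using sorted S unfolding sorted_diagonal_mat_def by auto
  have "(vnorm (S *\<^sub>v u))\<^sup>2 = (\<Sum>i\<in>{0..<min n m}. (S $$ (i, i) * u $ i)\<^sup>2)"
    using vnorm_square_sum_atLeastLessThan[of "S *\<^sub>v u" n] diagonal_mult_vec_square_sum[OF S diag u, of 0] S u
    by simp
  also have "\<dots> \<le> (\<Sum>i\<in>{0..<min n m}. (S $$ (r, r))\<^sup>2 * (u $ i)\<^sup>2)"
  proof (rule sum_mono)
    fix i assume i: "i \<in> {0..<min n m}"
    show "(S $$ (i, i) * u $ i)\<^sup>2 \<le> (S $$ (r, r))\<^sup>2 * (u $ i)\<^sup>2"
    proof (cases "i < r")
      case False
      then show ?thesis using nonneg mono i r by (intro square_mult_le) auto
    qed (use zero in simp)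
  qed
  also have "\<dots> \<le> (\<Sum>i\<in>{0..<m}. (S $$ (r, r))\<^sup>2 * (u $ i)\<^sup>2)"
    by (intro sum_mono2) auto
  also have "\<dots> = (S $$ (r, r) * vnorm u)\<^sup>2"
    using vnorm_square_sum_atLeastLessThan[OF u] by (simp add: power_mult_distrib sum_distrib_left)
  finally show ?thesis
    using nonneg r vnorm_nonneg by (auto intro: power2_le_imp_le)
qed

lemma spec_norm_diagonal_le:
  fixes D :: "real mat"
  assumes D: "D \<in> carrier_mat k k" and diag: "diagonal_mat D" and "0 < k" and "0 \<le> c"
    and le: "\<And>i. i < k \<Longrightarrow> \<bar>D $$ (i, i)\<bar> \<le> c"
  shows "spec_norm D \<le> c"
proof (rule spec_norm_leI[OF D \<open>0 < k\<close>])
  fix x :: "real vec" assume x: "x \<in> carrier_vec k"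
  have "(vnorm (D *\<^sub>v x))\<^sup>2 = (\<Sum>i\<in>{0..<k}. (D $$ (i, i) * x $ i)\<^sup>2)"
    using vnorm_square_sum_atLeastLessThan[of "D *\<^sub>v x" k] diagonal_mult_vec_square_sum[OF D diag x, of 0] D x
    by simp
  also have "\<dots> \<le> (\<Sum>i\<in>{0..<k}. c\<^sup>2 * (x $ i)\<^sup>2)"
    using le by (intro sum_mono square_mult_le) auto
  also have "\<dots> = (c * vnorm x)\<^sup>2"
    using vnorm_square_sum_atLeastLessThan[OF x] by (simp add: power_mult_distrib sum_distrib_left)
  finally show "vnorm (D *\<^sub>v x) \<le> c * vnorm x"
    using \<open>0 \<le> c\<close> vnorm_nonneg by (auto intro: power2_le_imp_le)
qed

section \<open>The sine of the canonical angles\<close>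

lemma singular_values_svd:
  fixes M :: "real mat"
  assumes M: "M \<in> carrier_mat k k"
  obtains P Z Q where "is_svd M P Z Q" "\<And>i. i < k \<Longrightarrow> singular_values M i = Z $$ (i, i)"
proof -
  obtain P Z Q where "is_svd M P Z Q" using svd_exists_square[OF M] by blast
  then have "\<exists>z P Z Q. is_svd M P Z Q \<and>
      (\<forall>i. z i = (if i < min (dim_row M) (dim_col M) then Z $$ (i, i) else 0))"
    by (intro exI[of _ "\<lambda>i. if i < min (dim_row M) (dim_col M) then Z $$ (i, i) else 0"]) blast
  from someI_ex[OF this] show thesis
    using that M unfolding singular_values_def by auto
qed

lemma vnorm_cols_upto_mult_vec:
  fixes U :: "real mat"
  assumes U: "U \<in> carrier_mat n n" "transpose_mat U * U = 1\<^sub>m n" and c: "c \<in> carrier_vec r" and "r \<le> n"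
  shows "vnorm (cols_upto r U *\<^sub>v c) = vnorm c"
  using cols_upto_mult_vec[OF U(1) c \<open>r \<le> n\<close>] vnorm_isometry[OF U] append_zero_vec_carrier(1)[OF c \<open>r \<le> n\<close>]
  by simp

lemma vnorm_cols_from_mult_vec:
  fixes U :: "real mat"
  assumes U: "U \<in> carrier_mat n n" "transpose_mat U * U = 1\<^sub>m n" and d: "d \<in> carrier_vec (n - r)" and "r \<le> n"
  shows "vnorm (cols_from r U *\<^sub>v d) = vnorm d"
  using cols_from_mult_vec[OF U(1) d \<open>r \<le> n\<close>] vnorm_isometry[OF U] append_zero_vec_carrier(2)[OF d \<open>r \<le> n\<close>]
  by simp

lemma vnorm_transpose_cols_square_sum:
  fixes U :: "real mat"
  assumes U: "U \<in> carrier_mat n n" "transpose_mat U * U = 1\<^sub>m n" and y: "y \<in> carrier_vec n" and "r \<le> n"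
  shows "(vnorm (transpose_mat (cols_upto r U) *\<^sub>v y))\<^sup>2 + (vnorm (transpose_mat (cols_from r U) *\<^sub>v y))\<^sup>2
    = (vnorm y)\<^sup>2"
proof -
  have "transpose_mat U *\<^sub>v y \<in> carrier_vec (r + (n - r))" using U y \<open>r \<le> n\<close> by simp
  then show ?thesis
    using vnorm_vec_first_last_square[of "transpose_mat U *\<^sub>v y" r "n - r"]
      vnorm_orthogonal_transpose[OF U y] U y \<open>r \<le> n\<close>
    by (simp add: transpose_cols_upto_mult_vec transpose_cols_from_mult_vec)
qed

lemma vnorm_transpose_cols_upto_le:
  fixes U :: "real mat"
  assumes U: "U \<in> carrier_mat n n" "transpose_mat U * U = 1\<^sub>m n" and y: "y \<in> carrier_vec n" and "r \<le> n"
  shows "vnorm (transpose_mat (cols_upto r U) *\<^sub>v y) \<le> vnorm y"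
  unfolding vnorm_le_iff_square_le
  using vnorm_transpose_cols_square_sum[OF assms] zero_le_power2 by (metis le_add_same_cancel1)

lemma vnorm_transpose_cols_from_le:
  fixes U :: "real mat"
  assumes U: "U \<in> carrier_mat n n" "transpose_mat U * U = 1\<^sub>m n" and y: "y \<in> carrier_vec n" and "r \<le> n"
  shows "vnorm (transpose_mat (cols_from r U) *\<^sub>v y) \<le> vnorm y"
  unfolding vnorm_le_iff_square_le
  using vnorm_transpose_cols_square_sum[OF assms] zero_le_power2 by (metis le_add_same_cancel2)

lemma spec_norm_sin_theta_le:
  fixes U Ut :: "real mat"
  assumes U: "U \<in> carrier_mat n n" "transpose_mat U * U = 1\<^sub>m n"
    and Ut: "Ut \<in> carrier_mat n n" "transpose_mat Ut * Ut = 1\<^sub>m n"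
    and r: "0 < r" "r \<le> n" and "0 \<le> c"
    and le: "\<And>w. w \<in> carrier_vec r \<Longrightarrow>
       vnorm ((transpose_mat (cols_from r U) * cols_upto r Ut) *\<^sub>v w) \<le> c * vnorm w"
  shows "spec_norm (sin_theta (cols_upto r U) (cols_upto r Ut)) \<le> c"
proof -
  define M where "M = transpose_mat (cols_upto r U) * cols_upto r Ut"
  have M: "M \<in> carrier_mat r r"
    unfolding M_def using cols_upto_carrier[OF U(1)] cols_upto_carrier[OF Ut(1)] by auto
  obtain P Z Q where svd: "is_svd M P Z Q" and z: "\<And>i. i < r \<Longrightarrow> singular_values M i = Z $$ (i, i)"
    using singular_values_svd[OF M] by blast
  note d = is_svdD[OF svd M]
  have "1 - (Z $$ (i, i))\<^sup>2 \<in> {0..c\<^sup>2}" if i: "i < r" for i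
  proof -
    define q where "q = Q *\<^sub>v unit_vec r i"
    have q: "q \<in> carrier_vec r" "vnorm q = 1"
      unfolding q_def using d vnorm_isometry[OF d(2,5)] vnorm_unit_vec[OF i] by auto
    have "vnorm (M *\<^sub>v q) = \<bar>Z $$ (i, i)\<bar>"
      using svd_mult_right_singular_vec[OF svd M i] vnorm_isometry[OF d(1,4)] vnorm_unit_vec[OF i]
      unfolding q_def by (simp add: vnorm_smult)
    moreover have "(vnorm (M *\<^sub>v q))\<^sup>2 + (vnorm ((transpose_mat (cols_from r U) * cols_upto r Ut) *\<^sub>v q))\<^sup>2 = 1"
      using vnorm_transpose_cols_square_sum[OF U _ r(2), of "cols_upto r Ut *\<^sub>v q"]
        vnorm_cols_upto_mult_vec[OF Ut q(1) r(2)] q(2) cols_upto_carrier[OF Ut(1)]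
        assoc_mult_mat_vec[OF _ cols_upto_carrier[OF Ut(1)] q(1)]
        cols_upto_carrier[OF U(1), of r] cols_from_carrier[OF U(1), of r]
      unfolding M_def by (simp add: mult_mat_vec_carrier[OF _ q(1)])
    moreover have "(vnorm ((transpose_mat (cols_from r U) * cols_upto r Ut) *\<^sub>v q))\<^sup>2 \<le> c\<^sup>2"
      using le[OF q(1)] q(2) \<open>0 \<le> c\<close> vnorm_nonneg by (simp add: power_mono)
    ultimately show ?thesis by (simp add: power2_abs) (metis le_add_same_cancel1 zero_le_power2)
  qed
  then show ?thesis
    unfolding sin_theta_def Let_def M_def[symmetric]
    using r \<open>0 \<le> c\<close> z
    by (intro spec_norm_diagonal_le) (auto simp: diagonal_mat_def real_sqrt_le_iff real_le_lsqrt)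
qed

section \<open>Coupled scalar inequalities\<close>

lemma coupled_max_le:
  fixes x y t s \<sigma> e :: real
  assumes "0 \<le> x" "0 \<le> y" "x \<le> 1" "y \<le> 1" "0 \<le> e" "0 \<le> s" "s < \<sigma>" "\<sigma> - e \<le> t"
    and x: "t * x \<le> s * y + e" and y: "t * y \<le> s * x + e"
  shows "max x y \<le> 2 * e / (\<sigma> - s)"
proof -
  define M where "M = max x y"
  have "(\<sigma> - e) * M \<le> s * M + e"
  proof (cases "y \<le> x")
    case True
    have "(\<sigma> - e) * x \<le> t * x" using assms by (intro mult_right_mono) auto
    also have "\<dots> \<le> s * x + e" using x True \<open>0 \<le> s\<close> mult_left_mono[of y x s] by linarith
    finally show ?thesis using True unfolding M_def by simp
  next
    case False
    have "(\<sigma> - e) * y \<le> t * y" using assms by (intro mult_right_mono) auto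
    also have "\<dots> \<le> s * y + e" using y False \<open>0 \<le> s\<close> mult_left_mono[of x y s] by linarith
    finally show ?thesis using False unfolding M_def by simp
  qed
  moreover have "e * M \<le> e" using assms mult_left_mono[of M 1 e] unfolding M_def by simp
  ultimately have "M * (\<sigma> - s) \<le> 2 * e" by (simp add: algebra_simps)
  then show ?thesis unfolding M_def[symmetric] using \<open>s < \<sigma>\<close> by (simp add: pos_le_divide_eq)
qed

lemma coupled_le:
  fixes x y t s \<sigma> e a p q :: real
  assumes "0 \<le> x" "0 \<le> y" "0 \<le> s" "s < \<sigma>" "0 \<le> e" "4 * e \<le> \<sigma> - s" "\<sigma> - e \<le> t"
    and "0 \<le> a" "a \<le> e" "0 \<le> p" "0 \<le> q"
    and x: "t * x \<le> (s + a) * y + p" and y: "t * y \<le> (s + a) * x + q"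
  shows "x \<le> 2 * ((\<sigma> * p + s * q + a * q) / (\<sigma>\<^sup>2 - s\<^sup>2))"
proof -
  define t0 b where "t0 = \<sigma> - e" and "b = s + a"
  have "0 \<le> t0" "0 \<le> b" "t0 \<le> \<sigma>" "b \<le> s + e" unfolding t0_def b_def using assms by auto
  have x': "t0 * x \<le> b * y + p" and y': "t0 * y \<le> b * x + q"
    using mult_right_mono[of t0 t x] mult_right_mono[of t0 t y] x y assms unfolding t0_def b_def by auto
  have "t0 * (t0 * x) \<le> b * (b * x + q) + t0 * p"
    using mult_left_mono[OF x' \<open>0 \<le> t0\<close>] mult_left_mono[OF y' \<open>0 \<le> b\<close>] by (simp add: algebra_simps)
  then have "x * (t0 * t0 - b * b) \<le> \<sigma> * p + b * q"
    using mult_right_mono[OF \<open>t0 \<le> \<sigma>\<close> \<open>0 \<le> p\<close>] by (simp add: algebra_simps)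
  moreover have "(\<sigma> * \<sigma> - s * s) / 2 \<le> t0 * t0 - b * b"
  proof -
    have "b * b \<le> (s + e) * (s + e)" using \<open>0 \<le> b\<close> \<open>b \<le> s + e\<close> by (intro mult_mono) auto
    moreover have "(\<sigma> - s) / 2 * (\<sigma> + s) \<le> (\<sigma> - s - 2 * e) * (\<sigma> + s)"
      using assms by (intro mult_right_mono) auto
    ultimately show ?thesis unfolding t0_def by (simp add: algebra_simps)
  qed
  ultimately have "x * ((\<sigma> * \<sigma> - s * s) / 2) \<le> \<sigma> * p + b * q"
    using mult_left_mono[of "(\<sigma> * \<sigma> - s * s) / 2" "t0 * t0 - b * b" x] \<open>0 \<le> x\<close> by linarith
  moreover have "0 < \<sigma>\<^sup>2 - s\<^sup>2" using assms by (simp add: power_strict_mono)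
  ultimately show ?thesis unfolding b_def by (simp add: field_simps power2_eq_square)
qed

section \<open>Perturbation of the leading singular subspaces\<close>

locale svd_perturbation =
  fixes A E U S V Ut St Vt :: "real mat" and n m r :: nat
  assumes A: "A \<in> carrier_mat n m" and E: "E \<in> carrier_mat n m"
    and r: "1 \<le> r" "r < min n m"
    and svd: "is_svd A U S V" and svd_pert: "is_svd (A + E) Ut St Vt"
begin

abbreviation "U1 \<equiv> cols_upto r U"
abbreviation "U2 \<equiv> cols_from r U"
abbreviation "V1 \<equiv> cols_upto r V"
abbreviation "V2 \<equiv> cols_from r V"
abbreviation "Ut1 \<equiv> cols_upto r Ut"
abbreviation "Vt1 \<equiv> cols_upto r Vt"
abbreviation "sin_U \<equiv> spec_norm (transpose_mat U2 * Ut1)"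
abbreviation "sin_V \<equiv> spec_norm (transpose_mat V2 * Vt1)"
abbreviation "eps \<equiv> spec_norm E"
abbreviation "alpha12 \<equiv> spec_norm (transpose_mat U1 * E * V2)"
abbreviation "alpha21 \<equiv> spec_norm (transpose_mat U2 * E * V1)"
abbreviation "alpha22 \<equiv> spec_norm (transpose_mat U2 * E * V2)"

text \<open>With 0-based indices, \<open>sr\<close>, \<open>sr1\<close> and \<open>srt\<close> are \<open>\<sigma>\<^sub>r\<close>, \<open>\<sigma>\<^sub>r\<^sub>+\<^sub>1\<close> and the
  \<open>r\<close>-th singular value of \<open>A + E\<close>.\<close>

abbreviation "sr \<equiv> S $$ (r - 1, r - 1)"
abbreviation "sr1 \<equiv> S $$ (r, r)"
abbreviation "srt \<equiv> St $$ (r - 1, r - 1)"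

lemma AE: "A + E \<in> carrier_mat n m" using A E by simp

lemma carrier:
  "U \<in> carrier_mat n n" "V \<in> carrier_mat m m" "S \<in> carrier_mat n m"
  "Ut \<in> carrier_mat n n" "Vt \<in> carrier_mat m m" "St \<in> carrier_mat n m"
  "U1 \<in> carrier_mat n r" "U2 \<in> carrier_mat n (n - r)" "V1 \<in> carrier_mat m r" "V2 \<in> carrier_mat m (m - r)"
  "Ut1 \<in> carrier_mat n r" "Vt1 \<in> carrier_mat m r"
  using is_svdD[OF svd A] is_svdD[OF svd_pert AE] by auto

lemma orthogonal:
  "transpose_mat U * U = 1\<^sub>m n" "transpose_mat V * V = 1\<^sub>m m"
  "transpose_mat Ut * Ut = 1\<^sub>m n" "transpose_mat Vt * Vt = 1\<^sub>m m"
  using is_svdD[OF svd A] is_svdD[OF svd_pert AE] by auto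

lemma sorted: "sorted_diagonal_mat S" "sorted_diagonal_mat St"
  using is_svdD[OF svd A] is_svdD[OF svd_pert AE] by auto

lemma r_le: "0 < r" "r \<le> n" "r \<le> m" "r \<le> min n m" "0 < n - r" "0 < m - r"
  using r by auto

lemma transposed:
  "svd_perturbation (transpose_mat A) (transpose_mat E) V (transpose_mat S) U Vt (transpose_mat St) Ut m n r"
proof
  show "is_svd (transpose_mat A + transpose_mat E) Vt (transpose_mat St) Ut"
    using is_svd_transpose[OF svd_pert AE] transpose_add[OF A E] by simp
qed (use A E r is_svd_transpose[OF svd A] in auto)

lemma nonneg: "0 \<le> sin_U" "0 \<le> sin_V" "0 \<le> eps" "0 \<le> alpha21" "0 \<le> alpha12" "0 \<le> alpha22"
proof -
  have c: "transpose_mat U2 * Ut1 \<in> carrier_mat (n - r) r" "transpose_mat V2 * Vt1 \<in> carrier_mat (m - r) r"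
    "transpose_mat U2 * E * V1 \<in> carrier_mat (n - r) r" "transpose_mat U1 * E * V2 \<in> carrier_mat r (m - r)"
    "transpose_mat U2 * E * V2 \<in> carrier_mat (n - r) (m - r)"
    using carrier E by auto
  show "0 \<le> sin_U" by (rule spec_norm_nonneg[OF c(1) r_le(1)])
  show "0 \<le> sin_V" by (rule spec_norm_nonneg[OF c(2) r_le(1)])
  show "0 \<le> eps" by (rule spec_norm_nonneg[OF E]) (use r_le in simp)
  show "0 \<le> alpha21" by (rule spec_norm_nonneg[OF c(3) r_le(1)])
  show "0 \<le> alpha12" by (rule spec_norm_nonneg[OF c(4) r_le(6)])
  show "0 \<le> alpha22" by (rule spec_norm_nonneg[OF c(5) r_le(6)])
qed

lemma sr1_le_sr: "0 \<le> sr1" "sr1 \<le> sr"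
  using sorted(1) carrier(3) r unfolding sorted_diagonal_mat_def by auto

lemma vnorm_transpose_U2_le: "y \<in> carrier_vec n \<Longrightarrow> vnorm (transpose_mat U2 *\<^sub>v y) \<le> vnorm y"
  by (rule vnorm_transpose_cols_from_le[OF carrier(1) orthogonal(1) _ r_le(2)])

lemma sin_U_le_1: "sin_U \<le> 1"
proof (rule spec_norm_leI[of _ "n - r" r])
  fix w :: "real vec" assume w: "w \<in> carrier_vec r"
  have "vnorm ((transpose_mat U2 * Ut1) *\<^sub>v w) = vnorm (transpose_mat U2 *\<^sub>v (Ut1 *\<^sub>v w))"
    using carrier w by simp
  also have "\<dots> \<le> vnorm (Ut1 *\<^sub>v w)" using carrier w by (intro vnorm_transpose_U2_le) simp
  also have "\<dots> = vnorm w" by (rule vnorm_cols_upto_mult_vec[OF carrier(4) orthogonal(3) w r_le(2)])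
  finally show "vnorm ((transpose_mat U2 * Ut1) *\<^sub>v w) \<le> 1 * vnorm w" by simp
qed (use carrier r_le in auto)

lemma sin_theta_U_le: "spec_norm (sin_theta U1 Ut1) \<le> sin_U"
proof (rule spec_norm_sin_theta_le[OF carrier(1) orthogonal(1) carrier(4) orthogonal(3) r_le(1,2) nonneg(1)])
  fix w :: "real vec" assume "w \<in> carrier_vec r"
  then show "vnorm ((transpose_mat U2 * Ut1) *\<^sub>v w) \<le> sin_U * vnorm w"
    using carrier by (intro spec_norm_mult_vec_le[of _ "n - r" r]) auto
qed

lemma alpha22_le: "alpha22 \<le> eps"
proof (rule spec_norm_leI[of _ "n - r" "m - r"])
  fix c :: "real vec" assume c: "c \<in> carrier_vec (m - r)"
  have V2c: "V2 *\<^sub>v c \<in> carrier_vec m" using carrier c by simp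
  have "vnorm ((transpose_mat U2 * E * V2) *\<^sub>v c) = vnorm (transpose_mat U2 *\<^sub>v (E *\<^sub>v (V2 *\<^sub>v c)))"
    using carrier E c mult3_mult_vec[of "transpose_mat U2" "n - r" n E m V2 "m - r" c] by simp
  also have "\<dots> \<le> vnorm (E *\<^sub>v (V2 *\<^sub>v c))" using E V2c by (intro vnorm_transpose_U2_le) simp
  also have "\<dots> \<le> eps * vnorm c"
    using spec_norm_mult_vec_le[OF E V2c] vnorm_cols_from_mult_vec[OF carrier(2) orthogonal(2) c r_le(3)]
    by simp
  finally show "vnorm ((transpose_mat U2 * E * V2) *\<^sub>v c) \<le> eps * vnorm c" .
qed (use carrier E r_le in auto)

text \<open>Weyl's inequality \<open>\<sigma>\<^sub>r \<le> \<sigma>\<^sub>r(A + E) + \<parallel>E\<parallel>\<close>, tested on a unit vector of \<open>span V1\<close> orthogonal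
  to the first \<open>r - 1\<close> right singular vectors of \<open>A + E\<close>.\<close>

lemma weyl: "sr - eps \<le> srt"
proof -
  have "transpose_mat Vt * V1 \<in> carrier_mat m r" using carrier by simp
  then obtain c where c: "c \<in> carrier_vec r" "vnorm c = 1"
    and zero: "\<And>i. i < r - 1 \<Longrightarrow> ((transpose_mat Vt * V1) *\<^sub>v c) $ i = 0"
    using exists_unit_vec_leading_entries_zero[OF _ r(1) r_le(3)] by blast
  define z where "z = V1 *\<^sub>v c"
  have z: "z \<in> carrier_vec m" "vnorm z = 1"
    unfolding z_def using carrier c vnorm_cols_upto_mult_vec[OF carrier(2) orthogonal(2) c(1) r_le(3)] by auto
  have c0: "c @\<^sub>v 0\<^sub>v (m - r) \<in> carrier_vec m" by (rule append_zero_vec_carrier(1)[OF c(1) r_le(3)])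
  have "sr \<le> vnorm (S *\<^sub>v (c @\<^sub>v 0\<^sub>v (m - r)))"
    using sorted_diagonal_head_ge[OF carrier(3) sorted(1) c(1) r(1) r_le(4)] c by simp
  also have "\<dots> = vnorm (A *\<^sub>v z)"
    using vnorm_svd_mult_vec[OF svd A z(1)] cols_upto_mult_vec[OF carrier(2) c(1) r_le(3)]
      orthogonal_mult_vec_cancel(2)[OF carrier(2) orthogonal(2) c0]
    unfolding z_def by simp
  also have "\<dots> \<le> vnorm ((A + E) *\<^sub>v z) + vnorm (E *\<^sub>v z)"
    using vnorm_reverse_triangle[of "A *\<^sub>v z" n "E *\<^sub>v z"] A E z add_mult_distrib_mat_vec[OF A E z(1)]
    by simp
  also have "vnorm ((A + E) *\<^sub>v z) \<le> srt"
  proof -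
    have "transpose_mat Vt *\<^sub>v z \<in> carrier_vec m" "\<And>i. i < r - 1 \<Longrightarrow> (transpose_mat Vt *\<^sub>v z) $ i = 0"
      using carrier c zero unfolding z_def by auto
    moreover have "r - 1 < min n m" using r by auto
    ultimately show ?thesis
      using sorted_diagonal_mult_vec_le[of St n m "transpose_mat Vt *\<^sub>v z" "r - 1"] carrier(6) sorted(2)
        vnorm_svd_mult_vec[OF svd_pert AE z(1)] vnorm_orthogonal_transpose[OF carrier(5) orthogonal(4) z(1)] z
      by simp
  qed
  also have "vnorm (E *\<^sub>v z) \<le> eps" using spec_norm_mult_vec_le[OF E z(1)] z by simp
  finally show ?thesis by simp
qed

lemma srt_sin_U_le:
  assumes "0 \<le> K"
    and K: "\<And>c. c \<in> carrier_vec r \<Longrightarrow> vnorm (transpose_mat U2 *\<^sub>v (E *\<^sub>v (Vt1 *\<^sub>v c))) \<le> K * vnorm c"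
  shows "srt * sin_U \<le> sr1 * sin_V + K"
proof (rule spec_norm_mult_diag_le[of _ "n - r" r])
  fix c :: "real vec" assume c: "c \<in> carrier_vec r"
  define z where "z = Vt1 *\<^sub>v c"
  have z: "z \<in> carrier_vec m" unfolding z_def using carrier c by simp
  \<comment> \<open>\<open>U2\<^sup>T Ut1 \<Sigma>t1 = U2\<^sup>T (A + E) Vt1 = \<Sigma>2 V2\<^sup>T Vt1 + U2\<^sup>T E Vt1\<close>\<close>
  have "(transpose_mat U2 * Ut1) *\<^sub>v vec r (\<lambda>i. St $$ (i, i) * c $ i) = transpose_mat U2 *\<^sub>v ((A + E) *\<^sub>v z)"
    using svd_mult_cols_upto[OF svd_pert AE r_le(4) c] carrier c unfolding z_def by simp
  also have "\<dots> = vec_last (S *\<^sub>v (transpose_mat V *\<^sub>v z)) (n - r) + transpose_mat U2 *\<^sub>v (E *\<^sub>v z)"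
    using transpose_cols_from_svd_mult_vec[OF svd A z r_le(2)] carrier A E z
    by (simp add: add_mult_distrib_mat_vec[OF A E z] mult_add_distrib_mat_vec[of _ "n - r" n])
  finally have "vnorm ((transpose_mat U2 * Ut1) *\<^sub>v vec r (\<lambda>i. St $$ (i, i) * c $ i))
      \<le> vnorm (vec_last (S *\<^sub>v (transpose_mat V *\<^sub>v z)) (n - r)) + vnorm (transpose_mat U2 *\<^sub>v (E *\<^sub>v z))"
    using vnorm_triangle[of "vec_last (S *\<^sub>v (transpose_mat V *\<^sub>v z)) (n - r)" "n - r"] carrier E z by simp
  also have "vnorm (vec_last (S *\<^sub>v (transpose_mat V *\<^sub>v z)) (n - r)) \<le> sr1 * vnorm (vec_last (transpose_mat V *\<^sub>v z) (m - r))"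
    using sorted_diagonal_tail_le[OF carrier(3) sorted(1) _ r(2), of "transpose_mat V *\<^sub>v z"] carrier z by simp
  also have "vec_last (transpose_mat V *\<^sub>v z) (m - r) = (transpose_mat V2 * Vt1) *\<^sub>v c"
    using transpose_cols_from_mult_vec[OF carrier(2) z r_le(3)] carrier c unfolding z_def by simp
  also have "sr1 * vnorm ((transpose_mat V2 * Vt1) *\<^sub>v c) \<le> sr1 * (sin_V * vnorm c)"
    using sr1_le_sr carrier c by (intro mult_left_mono spec_norm_mult_vec_le[of _ "m - r" r]) auto
  finally show "vnorm ((transpose_mat U2 * Ut1) *\<^sub>v vec r (\<lambda>i. St $$ (i, i) * c $ i))
      \<le> (sr1 * sin_V + K) * vnorm c"
    using K[OF c] unfolding z_def by (simp add: algebra_simps)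
next
  have "r - 1 < min n m" using r by auto
  then show "0 \<le> srt" "\<And>i. i < r \<Longrightarrow> srt \<le> St $$ (i, i)"
    using sorted_diagonalD[OF carrier(6) sorted(2)] by auto
qed (use carrier r_le nonneg sr1_le_sr \<open>0 \<le> K\<close> in auto)

lemma srt_sin_U_le_eps: "srt * sin_U \<le> sr1 * sin_V + eps"
proof (rule srt_sin_U_le[OF nonneg(3)])
  fix c :: "real vec" assume c: "c \<in> carrier_vec r"
  have z: "Vt1 *\<^sub>v c \<in> carrier_vec m" using carrier c by simp
  have "vnorm (transpose_mat U2 *\<^sub>v (E *\<^sub>v (Vt1 *\<^sub>v c))) \<le> vnorm (E *\<^sub>v (Vt1 *\<^sub>v c))"
    using E z by (intro vnorm_transpose_U2_le) simp
  also have "\<dots> \<le> eps * vnorm c"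
    using spec_norm_mult_vec_le[OF E z] vnorm_cols_upto_mult_vec[OF carrier(5) orthogonal(4) c r_le(3)] by simp
  finally show "vnorm (transpose_mat U2 *\<^sub>v (E *\<^sub>v (Vt1 *\<^sub>v c))) \<le> eps * vnorm c" .
qed

lemma srt_sin_U_le_alpha: "srt * sin_U \<le> sr1 * sin_V + (alpha21 + alpha22 * sin_V)"
proof (rule srt_sin_U_le)
  fix c :: "real vec" assume c: "c \<in> carrier_vec r"
  define z where "z = Vt1 *\<^sub>v c"
  have z: "z \<in> carrier_vec m" "vnorm z = vnorm c"
    unfolding z_def using carrier c vnorm_cols_upto_mult_vec[OF carrier(5) orthogonal(4) c r_le(3)] by auto
  define h t where "h = transpose_mat V1 *\<^sub>v z" and "t = transpose_mat V2 *\<^sub>v z"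
  have h: "h \<in> carrier_vec r" and t: "t \<in> carrier_vec (m - r)" unfolding h_def t_def using carrier z by auto
  have M21: "transpose_mat U2 * E * V1 \<in> carrier_mat (n - r) r"
    and M22: "transpose_mat U2 * E * V2 \<in> carrier_mat (n - r) (m - r)"
    using carrier E by auto
  have "(transpose_mat U2 * E * V1) *\<^sub>v h + (transpose_mat U2 * E * V2) *\<^sub>v t
      = transpose_mat U2 *\<^sub>v (E *\<^sub>v (V1 *\<^sub>v h)) + transpose_mat U2 *\<^sub>v (E *\<^sub>v (V2 *\<^sub>v t))"
    using mult3_mult_vec[of "transpose_mat U2" "n - r" n E m V1 r h]
      mult3_mult_vec[of "transpose_mat U2" "n - r" n E m V2 "m - r" t] carrier E h t by simp
  also have "\<dots> = transpose_mat U2 *\<^sub>v (E *\<^sub>v z)"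
    using cols_split_mult_vec[OF carrier(2) orthogonal(2) z(1) r_le(3)] carrier E h t
    unfolding h_def[symmetric] t_def[symmetric]
    by (simp add: mult_add_distrib_mat_vec[of _ "n - r" n] mult_add_distrib_mat_vec[OF E])
  finally have "vnorm (transpose_mat U2 *\<^sub>v (E *\<^sub>v z))
      \<le> vnorm ((transpose_mat U2 * E * V1) *\<^sub>v h) + vnorm ((transpose_mat U2 * E * V2) *\<^sub>v t)"
    using vnorm_triangle[OF mult_mat_vec_carrier[OF M21 h] mult_mat_vec_carrier[OF M22 t]] by simp
  also have "\<dots> \<le> alpha21 * vnorm h + alpha22 * vnorm t"
    by (rule add_mono[OF spec_norm_mult_vec_le[OF M21 h] spec_norm_mult_vec_le[OF M22 t]])
  also have "\<dots> \<le> alpha21 * vnorm c + alpha22 * (sin_V * vnorm c)"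
  proof (intro add_mono mult_left_mono)
    show "vnorm h \<le> vnorm c"
      using vnorm_transpose_cols_upto_le[OF carrier(2) orthogonal(2) z(1) r_le(3)] z unfolding h_def by simp
    show "vnorm t \<le> sin_V * vnorm c"
      using spec_norm_mult_vec_le[of "transpose_mat V2 * Vt1" "m - r" r c] carrier c
      unfolding t_def z_def by simp
  qed (use nonneg in auto)
  finally show "vnorm (transpose_mat U2 *\<^sub>v (E *\<^sub>v (Vt1 *\<^sub>v c))) \<le> (alpha21 + alpha22 * sin_V) * vnorm c"
    unfolding z_def by (simp add: algebra_simps)
qed (use nonneg in simp)

lemma transposed_bounds:
  "srt * sin_V \<le> sr1 * sin_U + eps" "srt * sin_V \<le> sr1 * sin_U + (alpha12 + alpha22 * sin_U)"
  "sin_V \<le> 1" "spec_norm (sin_theta V1 Vt1) \<le> sin_V"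
proof -
  interpret T: svd_perturbation "transpose_mat A" "transpose_mat E" V "transpose_mat S" U Vt
    "transpose_mat St" Ut m n r
    by (rule transposed)
  have "transpose_mat (transpose_mat V2 * transpose_mat E * U1) = transpose_mat U1 * E * V2"
    "transpose_mat (transpose_mat V2 * transpose_mat E * U2) = transpose_mat U2 * E * V2"
    using transpose_mult3[of "transpose_mat V2" "m - r" m "transpose_mat E" n U1 r]
      transpose_mult3[of "transpose_mat V2" "m - r" m "transpose_mat E" n U2 "n - r"] carrier E by auto
  then have eq: "spec_norm (transpose_mat V2 * transpose_mat E * U1) = alpha12"
    "spec_norm (transpose_mat V2 * transpose_mat E * U2) = alpha22"
    "spec_norm (transpose_mat E) = eps"
    "transpose_mat S $$ (r, r) = sr1" "transpose_mat St $$ (r - 1, r - 1) = srt"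
    using spec_norm_transpose[of "transpose_mat V2 * transpose_mat E * U1" "m - r" r]
      spec_norm_transpose[of "transpose_mat V2 * transpose_mat E * U2" "m - r" "n - r"]
      spec_norm_transpose[OF E] carrier E r by auto
  show "srt * sin_V \<le> sr1 * sin_U + eps" "srt * sin_V \<le> sr1 * sin_U + (alpha12 + alpha22 * sin_U)"
    "sin_V \<le> 1" "spec_norm (sin_theta V1 Vt1) \<le> sin_V"
    using T.srt_sin_U_le_eps T.srt_sin_U_le_alpha T.sin_U_le_1 T.sin_theta_U_le unfolding eq by simp_all
qed

lemma sin_theta_max_le:
  "max (spec_norm (sin_theta U1 Ut1)) (spec_norm (sin_theta V1 Vt1))
     \<le> (if sr = sr1 then 1 else min (2 * eps / (sr - sr1)) 1)"
proof -
  have "max (spec_norm (sin_theta U1 Ut1)) (spec_norm (sin_theta V1 Vt1)) \<le> max sin_U sin_V"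
    using sin_theta_U_le transposed_bounds(4) by auto
  also have "\<dots> \<le> (if sr = sr1 then 1 else min (2 * eps / (sr - sr1)) 1)"
    using coupled_max_le[OF nonneg(1,2) sin_U_le_1 transposed_bounds(3) nonneg(3) sr1_le_sr(1) _ weyl
        srt_sin_U_le_eps transposed_bounds(1)] sr1_le_sr sin_U_le_1 transposed_bounds(3) by auto
  finally show ?thesis .
qed

lemma sin_theta_le_alpha:
  "sr1 < sr \<and> 4 * eps \<le> sr - sr1 \<longrightarrow>
     spec_norm (sin_theta U1 Ut1) \<le> 8 / 3 * ((sr * alpha21 + sr1 * alpha12 + alpha22 * alpha12) / (sr\<^sup>2 - sr1\<^sup>2))
   \<and> spec_norm (sin_theta V1 Vt1) \<le> 8 / 3 * ((sr * alpha12 + sr1 * alpha21 + alpha22 * alpha21) / (sr\<^sup>2 - sr1\<^sup>2))"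
proof
  assume gap: "sr1 < sr \<and> 4 * eps \<le> sr - sr1"
  have U: "srt * sin_U \<le> (sr1 + alpha22) * sin_V + alpha21"
    and V: "srt * sin_V \<le> (sr1 + alpha22) * sin_U + alpha12"
    using srt_sin_U_le_alpha transposed_bounds(2) by (simp_all add: algebra_simps)
  let ?xU = "(sr * alpha21 + sr1 * alpha12 + alpha22 * alpha12) / (sr\<^sup>2 - sr1\<^sup>2)"
    and ?xV = "(sr * alpha12 + sr1 * alpha21 + alpha22 * alpha21) / (sr\<^sup>2 - sr1\<^sup>2)"
  \<comment> \<open>the argument gives the constant \<open>2\<close>, which is better than the stated \<open>8 / 3\<close>\<close>
  have "sin_U \<le> 2 * ?xU" "sin_V \<le> 2 * ?xV"
    using coupled_le[OF nonneg(1,2) sr1_le_sr(1) _ nonneg(3) _ weyl nonneg(6) alpha22_le nonneg(4,5) U V]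
      coupled_le[OF nonneg(2,1) sr1_le_sr(1) _ nonneg(3) _ weyl nonneg(6) alpha22_le nonneg(5,4) V U]
      gap by auto
  moreover have "0 \<le> ?xU" "0 \<le> ?xV"
    using nonneg sr1_le_sr gap by (auto intro!: divide_nonneg_nonneg simp: power_mono)
  ultimately show "spec_norm (sin_theta U1 Ut1) \<le> 8 / 3 * ?xU \<and> spec_norm (sin_theta V1 Vt1) \<le> 8 / 3 * ?xV"
    using sin_theta_U_le transposed_bounds(4) by linarith
qed

end

theorem theorem3p2:
  fixes A dA U S V Ut St Vt :: "real mat" and n m r :: nat
  assumes "A \<in> carrier_mat n m" and "dA \<in> carrier_mat n m"
    and "1 \<le> r" and "r < min n m"
    and "is_svd A U S V"
    and "is_svd (A + dA) Ut St Vt"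
  shows
    "(let U1 = cols_upto r U; V1 = cols_upto r V;
          U1t = cols_upto r Ut; V1t = cols_upto r Vt;
          sr = S $$ (r - 1, r - 1); sr1 = S $$ (r, r) in
      max (spec_norm (sin_theta U1 U1t)) (spec_norm (sin_theta V1 V1t))
        \<le> (if sr = sr1 then 1 else min (2 * spec_norm dA / (sr - sr1)) 1))
   \<and> (let U1 = cols_upto r U; U2 = cols_from r U;
          V1 = cols_upto r V; V2 = cols_from r V;
          U1t = cols_upto r Ut; V1t = cols_upto r Vt;
          sr = S $$ (r - 1, r - 1); sr1 = S $$ (r, r);
          a12 = transpose_mat U1 * dA * V2;
          a21 = transpose_mat U2 * dA * V1;
          a22 = transpose_mat U2 * dA * V2 in
      (sr1 < sr \<and> 4 * spec_norm dA \<le> sr - sr1) \<longrightarrow>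
        spec_norm (sin_theta U1 U1t) \<le> 8 / 3 *
          ((sr * spec_norm a21 + sr1 * spec_norm a12 + spec_norm a22 * spec_norm a12)
             / (sr\<^sup>2 - sr1\<^sup>2))
      \<and> spec_norm (sin_theta V1 V1t) \<le> 8 / 3 *
          ((sr * spec_norm a12 + sr1 * spec_norm a21 + spec_norm a22 * spec_norm a21)
             / (sr\<^sup>2 - sr1\<^sup>2)))"
proof -
  interpret svd_perturbation A dA U S V Ut St Vt n m r
    using assms by unfold_locales
  show ?thesis
    unfolding Let_def using sin_theta_max_le sin_theta_le_alpha by blast
qed

end
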